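(* Let $B$ be a simple Bratteli diagram of rank $d\ge 2$ all of whose incidence matrices have strictly positive entries. Then both $\mathcal P_B$ and its complement $\mathcal O_B\setminus\mathcal P_B$ are dense in $\mathcal O_B$.
   Context: A Bratteli diagram $B=(V^*,E)$ consists of a vertex set $V^*=\bigsqcup_{n\ge 0}V_n$ and edge set $E=\bigsqcup_{n\ge1}E_n$, where $V_0=\{v_0\}$, all $V_n,E_n$ are finite, and there are maps $r,s:E\to V^*$ with $r(E_n)=V_n$, $s(E_n)=V_{n-1}$, $s^{-1}(v)\neq\emptyset$ for all $v$ and $r^{-1}(v)\neq\emptyset$ for $v\neq v_0$. The incidence matrix $F_n=(f^{(n)}_{v,w})_{v\in V_{n+1},w\in V_n}$ has $f^{(n)}_{v,w}$ = number of edges in $E_{n+1}$ from $w$ to $v$. $X_B$ is the space of infinite paths from $v_0$ with the cylinder topology. Standing assumptions: $B$ is aperiodic (every tail-equivalence class of $X_B$ is infinite), $X_B$ is a Cantor set, and $B$ is not a disjoint union of two subdiagrams sharing only $v_0$. $B$ is simple if for every $n$ there is $m>n$ such that every vertex of $V_n$ is joined by a path to every vertex of $V_m$; $B$ has rank $d$ if $\sup_n|V_n|<\infty$ and $d$ is the smallest integer with $|V_n|=d$ infinitely often. An ordering $\omega$ is a linear order on each $r^{-1}(v)$, $v\neq v_0$; $\mathcal O_B=\prod_{v\in V^*\setminus V_0}P_v$ where $P_v$ is the (discrete) set of linear orders on $r^{-1}(v)$, with the product topology. Maximal/minimal paths and Vershik maps are defined as usual: a Vershik map is a homeomorphism $\varphi$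 of $X_B$ mapping the set of maximal infinite paths onto the set of minimal ones, and sending each non-maximal $x$ to the path obtained by replacing the first non-maximal edge $x_k$ by its successor in $r^{-1}(r(x_k))$ and $(x_1,\dots,x_{k-1})$ by the minimal path to the source of that successor. $\omega$ is perfect if a Vershik map exists; $\mathcal P_B$ is the set of perfect orderings. *)

theory Defs
  imports "HOL-Analysis.Analysis"
begin

text \<open>
  A diagram is given by
  V :: nat => 'v set   (V n = vertices of level n),
  E :: nat => 'e set   (E n = edges of level n, n >= 1; E 0 is ignored),
  src rng :: nat => 'e => 'v  (source / range of a level-n edge),
  v0 :: 'v (the top vertex).
  Vertices are the pairs (n, v) with v in V n and edges the pairs (n, e) with e in E n,
  so that the levels are automatically disjoint.
\<close>

definition bratteli ::
  "(nat \<Rightarrow> 'v set) \<Rightarrow> (nat \<Rightarrow> 'e set) \<Rightarrow> (nat \<Rightarrow> 'e \<Rightarrow> 'v) \<Rightarrow> (nat \<Rightarrow> 'e \<Rightarrow> 'v) \<Rightarrow> 'v \<Rightarrow> bool"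
  where "bratteli V E src rng v0 \<longleftrightarrow>
     V 0 = {v0} \<and> (\<forall>n. finite (V n)) \<and> (\<forall>n\<ge>1. finite (E n)) \<and>
     (\<forall>n\<ge>1. \<forall>e\<in>E n. src n e \<in> V (n - 1) \<and> rng n e \<in> V n) \<and>
     (\<forall>n. \<forall>v\<in>V n. \<exists>e\<in>E (Suc n). src (Suc n) e = v) \<and>
     (\<forall>n\<ge>1. \<forall>v\<in>V n. \<exists>e\<in>E n. rng n e = v)"

definition incidence :: "(nat \<Rightarrow> 'e set) \<Rightarrow> (nat \<Rightarrow> 'e \<Rightarrow> 'v) \<Rightarrow> (nat \<Rightarrow> 'e \<Rightarrow> 'v) \<Rightarrow> nat \<Rightarrow> 'v \<Rightarrow> 'v \<Rightarrow> nat"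
  where "incidence E src rng n v w = card {e \<in> E (Suc n). src (Suc n) e = w \<and> rng (Suc n) e = v}"

definition positive_incidence ::
  "(nat \<Rightarrow> 'v set) \<Rightarrow> (nat \<Rightarrow> 'e set) \<Rightarrow> (nat \<Rightarrow> 'e \<Rightarrow> 'v) \<Rightarrow> (nat \<Rightarrow> 'e \<Rightarrow> 'v) \<Rightarrow> bool"
  where "positive_incidence V E src rng \<longleftrightarrow>
     (\<forall>n. \<forall>v\<in>V (Suc n). \<forall>w\<in>V n. incidence E src rng n v w > 0)"

text \<open>Infinite paths: x i is the edge of level i+1.\<close>
definition paths ::
  "(nat \<Rightarrow> 'e set) \<Rightarrow> (nat \<Rightarrow> 'e \<Rightarrow> 'v) \<Rightarrow> (nat \<Rightarrow> 'e \<Rightarrow> 'v) \<Rightarrow> 'v \<Rightarrow> (nat \<Rightarrow> 'e) set"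
  where "paths E src rng v0 = {x. (\<forall>i. x i \<in> E (Suc i)) \<and> src 1 (x 0) = v0 \<and>
            (\<forall>i. rng (Suc i) (x i) = src (Suc (Suc i)) (x (Suc i)))}"

definition path_top ::
  "(nat \<Rightarrow> 'e set) \<Rightarrow> (nat \<Rightarrow> 'e \<Rightarrow> 'v) \<Rightarrow> (nat \<Rightarrow> 'e \<Rightarrow> 'v) \<Rightarrow> 'v \<Rightarrow> (nat \<Rightarrow> 'e) topology"
  where "path_top E src rng v0 =
     subtopology (product_topology (\<lambda>i. discrete_topology (E (Suc i))) UNIV) (paths E src rng v0)"

text \<open>Finite path p_n, ..., p_(m-1) (edges of levels n+1..m) from v in V n to w in V m.\<close>
definition fin_path ::
  "(nat \<Rightarrow> 'e set) \<Rightarrow> (nat \<Rightarrow> 'e \<Rightarrow> 'v) \<Rightarrow> (nat \<Rightarrow> 'e \<Rightarrow> 'v) \<Rightarrow> nat \<Rightarrow> nat \<Rightarrow> (nat \<Rightarrow> 'e) \<Rightarrow> 'v \<Rightarrow> 'v \<Rightarrow> bool"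
  where "fin_path E src rng n m p v w \<longleftrightarrow> n < m \<and>
     (\<forall>i. n \<le> i \<and> i < m \<longrightarrow> p i \<in> E (Suc i)) \<and>
     (\<forall>i. n \<le> i \<and> Suc i < m \<longrightarrow> rng (Suc i) (p i) = src (Suc (Suc i)) (p (Suc i))) \<and>
     src (Suc n) (p n) = v \<and> rng m (p (m - 1)) = w"

definition simple_bratteli ::
  "(nat \<Rightarrow> 'v set) \<Rightarrow> (nat \<Rightarrow> 'e set) \<Rightarrow> (nat \<Rightarrow> 'e \<Rightarrow> 'v) \<Rightarrow> (nat \<Rightarrow> 'e \<Rightarrow> 'v) \<Rightarrow> bool"
  where "simple_bratteli V E src rng \<longleftrightarrow>
     (\<forall>n. \<exists>m>n. \<forall>v\<in>V n. \<forall>w\<in>V m. \<exists>p. fin_path E src rng n m p v w)"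

definition has_rank :: "(nat \<Rightarrow> 'v set) \<Rightarrow> nat \<Rightarrow> bool"
  where "has_rank V d \<longleftrightarrow> (\<exists>b. \<forall>n. card (V n) \<le> b) \<and>
     d = (LEAST k. infinite {n. card (V n) = k})"

definition aperiodic ::
  "(nat \<Rightarrow> 'e set) \<Rightarrow> (nat \<Rightarrow> 'e \<Rightarrow> 'v) \<Rightarrow> (nat \<Rightarrow> 'e \<Rightarrow> 'v) \<Rightarrow> 'v \<Rightarrow> bool"
  where "aperiodic E src rng v0 \<longleftrightarrow>
     (\<forall>x\<in>paths E src rng v0. infinite {y \<in> paths E src rng v0. \<exists>N. \<forall>i\<ge>N. y i = x i})"

definition cantor_paths ::
  "(nat \<Rightarrow> 'e set) \<Rightarrow> (nat \<Rightarrow> 'e \<Rightarrow> 'v) \<Rightarrow> (nat \<Rightarrow> 'e \<Rightarrow> 'v) \<Rightarrow> 'v \<Rightarrow> bool"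
  where "cantor_paths E src rng v0 \<longleftrightarrow>
     path_top E src rng v0 homeomorphic_space
       product_topology (\<lambda>_. discrete_topology (UNIV :: bool set)) (UNIV :: nat set)"

text \<open>B is a disjoint union of two subdiagrams sharing only v0.\<close>
definition decomposable ::
  "(nat \<Rightarrow> 'v set) \<Rightarrow> (nat \<Rightarrow> 'e set) \<Rightarrow> (nat \<Rightarrow> 'e \<Rightarrow> 'v) \<Rightarrow> (nat \<Rightarrow> 'e \<Rightarrow> 'v) \<Rightarrow> bool"
  where "decomposable V E src rng \<longleftrightarrow> (\<exists>A C :: nat \<Rightarrow> 'v set.
     (\<forall>n\<ge>1. A n \<union> C n = V n \<and> A n \<inter> C n = {}) \<and>
     (\<exists>n\<ge>1. A n \<noteq> {}) \<and> (\<exists>n\<ge>1. C n \<noteq> {}) \<and>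
     (\<forall>n\<ge>2. \<forall>e\<in>E n. (src n e \<in> A (n - 1) \<longleftrightarrow> rng n e \<in> A n)))"

definition in_edges :: "(nat \<Rightarrow> 'e set) \<Rightarrow> (nat \<Rightarrow> 'e \<Rightarrow> 'v) \<Rightarrow> nat \<Rightarrow> 'v \<Rightarrow> 'e set"
  where "in_edges E rng n v = {e \<in> E n. rng n e = v}"

text \<open>O_B: product over vertices (n,v), n >= 1, of the discrete sets of linear orders on r^-1(v).
  An ordering is a function from vertices to relations (undefined off the index set).\<close>
definition ord_top ::
  "(nat \<Rightarrow> 'v set) \<Rightarrow> (nat \<Rightarrow> 'e set) \<Rightarrow> (nat \<Rightarrow> 'e \<Rightarrow> 'v) \<Rightarrow> (nat \<times> 'v \<Rightarrow> 'e rel) topology"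
  where "ord_top V E rng = product_topology
     (\<lambda>(n, v). discrete_topology {R. linear_order_on (in_edges E rng n v) R}) (SIGMA n:{1..}. V n)"

definition is_max_edge :: "(nat \<Rightarrow> 'e set) \<Rightarrow> (nat \<Rightarrow> 'e \<Rightarrow> 'v) \<Rightarrow> (nat \<times> 'v \<Rightarrow> 'e rel) \<Rightarrow> nat \<Rightarrow> 'e \<Rightarrow> bool"
  where "is_max_edge E rng \<omega> n e \<longleftrightarrow> (\<forall>f\<in>in_edges E rng n (rng n e). (f, e) \<in> \<omega> (n, rng n e))"

definition is_min_edge :: "(nat \<Rightarrow> 'e set) \<Rightarrow> (nat \<Rightarrow> 'e \<Rightarrow> 'v) \<Rightarrow> (nat \<times> 'v \<Rightarrow> 'e rel) \<Rightarrow> nat \<Rightarrow> 'e \<Rightarrow> bool"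
  where "is_min_edge E rng \<omega> n e \<longleftrightarrow> (\<forall>f\<in>in_edges E rng n (rng n e). (e, f) \<in> \<omega> (n, rng n e))"

definition is_succ_edge :: "(nat \<Rightarrow> 'e set) \<Rightarrow> (nat \<Rightarrow> 'e \<Rightarrow> 'v) \<Rightarrow> (nat \<times> 'v \<Rightarrow> 'e rel) \<Rightarrow> nat \<Rightarrow> 'e \<Rightarrow> 'e \<Rightarrow> bool"
  where "is_succ_edge E rng \<omega> n e e' \<longleftrightarrow>
     e' \<in> in_edges E rng n (rng n e) \<and> (e, e') \<in> \<omega> (n, rng n e) \<and> e' \<noteq> e \<and>
     (\<forall>f\<in>in_edges E rng n (rng n e). (e, f) \<in> \<omega> (n, rng n e) \<and> f \<noteq> e \<longrightarrow> (e', f) \<in> \<omega> (n, rng n e))"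

definition max_paths ::
  "(nat \<Rightarrow> 'e set) \<Rightarrow> (nat \<Rightarrow> 'e \<Rightarrow> 'v) \<Rightarrow> (nat \<Rightarrow> 'e \<Rightarrow> 'v) \<Rightarrow> 'v \<Rightarrow> (nat \<times> 'v \<Rightarrow> 'e rel) \<Rightarrow> (nat \<Rightarrow> 'e) set"
  where "max_paths E src rng v0 \<omega> = {x \<in> paths E src rng v0. \<forall>i. is_max_edge E rng \<omega> (Suc i) (x i)}"

definition min_paths ::
  "(nat \<Rightarrow> 'e set) \<Rightarrow> (nat \<Rightarrow> 'e \<Rightarrow> 'v) \<Rightarrow> (nat \<Rightarrow> 'e \<Rightarrow> 'v) \<Rightarrow> 'v \<Rightarrow> (nat \<times> 'v \<Rightarrow> 'e rel) \<Rightarrow> (nat \<Rightarrow> 'e) set"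
  where "min_paths E src rng v0 \<omega> = {x \<in> paths E src rng v0. \<forall>i. is_min_edge E rng \<omega> (Suc i) (x i)}"

definition vershik_map ::
  "(nat \<Rightarrow> 'e set) \<Rightarrow> (nat \<Rightarrow> 'e \<Rightarrow> 'v) \<Rightarrow> (nat \<Rightarrow> 'e \<Rightarrow> 'v) \<Rightarrow> 'v \<Rightarrow> (nat \<times> 'v \<Rightarrow> 'e rel)
    \<Rightarrow> ((nat \<Rightarrow> 'e) \<Rightarrow> (nat \<Rightarrow> 'e)) \<Rightarrow> bool"
  where "vershik_map E src rng v0 \<omega> \<phi> \<longleftrightarrow>
     homeomorphic_map (path_top E src rng v0) (path_top E src rng v0) \<phi> \<and>
     \<phi> ` max_paths E src rng v0 \<omega> = min_paths E src rng v0 \<omega> \<and>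
     (\<forall>x \<in> paths E src rng v0 - max_paths E src rng v0 \<omega>.
        let k = (LEAST i. \<not> is_max_edge E rng \<omega> (Suc i) (x i)) in
          is_succ_edge E rng \<omega> (Suc k) (x k) (\<phi> x k) \<and>
          (\<forall>i>k. \<phi> x i = x i) \<and>
          (\<forall>i<k. is_min_edge E rng \<omega> (Suc i) (\<phi> x i)))"

definition perfect_orderings ::
  "(nat \<Rightarrow> 'v set) \<Rightarrow> (nat \<Rightarrow> 'e set) \<Rightarrow> (nat \<Rightarrow> 'e \<Rightarrow> 'v) \<Rightarrow> (nat \<Rightarrow> 'e \<Rightarrow> 'v) \<Rightarrow> 'v \<Rightarrow> (nat \<times> 'v \<Rightarrow> 'e rel) set"
  where "perfect_orderings V E src rng v0 =
     {\<omega> \<in> topspace (ord_top V E rng). \<exists>\<phi>. vershik_map E src rng v0 \<omega> \<phi>}"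

end

theory Submission
  imports Defs
begin

text \<open>A basic open set of orderings constrains only finitely many levels, so it suffices to
  show that an ordering may be changed below any level \<open>N\<close> into a perfect one and into a
  non-perfect one. Rank at least two provides distinct vertices \<open>p n\<close>, \<open>q n\<close> on all deep
  levels, and positive incidence matrices provide an edge between any two vertices of consecutive
  levels. If below \<open>N\<close> every vertex has its minimal edge coming from \<open>q (n - 1)\<close> and its
  maximal edge from \<open>p (n - 1)\<close>, there is a single maximal and a single minimal path and the
  Vershik map is a homeomorphism (its inverse is the Vershik map of the reversed ordering). If
  instead the edges into \<open>q n\<close> begin with one from \<open>p (n - 1)\<close> followed by one from \<open>q (n - 1)\<close>,
  then paths leaving the maximal path through the \<open>p\<close>-vertices at level \<open>k\<close> are mapped to paths
  whose minimal part alternates between the two tracks, so their edge at level \<open>N + 1\<close> depends on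
  the parity of \<open>k\<close> and no Vershik map can be continuous.\<close>

section \<open>Linear orders on finite sets with prescribed ends\<close>

lemma linear_order_on_finite_has_least:
  assumes "linear_order_on A R" "finite S" "S \<noteq> {}" "S \<subseteq> A"
  shows "\<exists>m\<in>S. \<forall>f\<in>S. (m, f) \<in> R"
  using assms(2,3,4)
proof (induction S rule: finite_ne_induct)
  case (singleton x)
  then show ?case using assms(1)
    by (auto simp: linear_order_on_def partial_order_on_def preorder_on_def refl_on_def)
next
  case (insert x F)
  then obtain m where m: "m \<in> F" "\<forall>f\<in>F. (m, f) \<in> R" by auto
  have tr: "trans R" and tot: "total_on A R" and rf: "refl_on A R"
    using assms(1) by (auto simp: linear_order_on_def partial_order_on_def preorder_on_def)
  show ?case
  proof (cases "(x, m) \<in> R")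
    case True
    then show ?thesis using m insert.prems rf by (auto simp: refl_on_def intro: transD[OF tr])
  next
    case False
    then have "(m, x) \<in> R" using tot m insert.prems rf
      by (metis insert_subset refl_onD subsetD total_on_def)
    then show ?thesis using m by auto
  qed
qed

lemma linear_order_on_antisym:
  "linear_order_on A R \<Longrightarrow> (x, y) \<in> R \<Longrightarrow> (y, x) \<in> R \<Longrightarrow> x = y"
  by (auto simp: linear_order_on_def partial_order_on_def antisym_def)

lemma linear_order_on_total:
  "linear_order_on A R \<Longrightarrow> x \<in> A \<Longrightarrow> y \<in> A \<Longrightarrow> (x, y) \<in> R \<or> (y, x) \<in> R"
  by (cases "x = y")
    (auto simp: linear_order_on_def partial_order_on_def preorder_on_def refl_on_def total_on_def)

lemma linear_order_on_least_unique:
  assumes "linear_order_on A R" "a \<in> A" "e \<in> A" "\<forall>f\<in>A. (a, f) \<in> R" "\<forall>f\<in>A. (e, f) \<in> R"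
  shows "e = a"
  using assms by (meson linear_order_on_antisym)

lemma linear_order_on_greatest_unique:
  assumes "linear_order_on A R" "b \<in> A" "e \<in> A" "\<forall>f\<in>A. (f, b) \<in> R" "\<forall>f\<in>A. (f, e) \<in> R"
  shows "e = b"
  using assms by (meson linear_order_on_antisym)

definition list_order :: "'a list \<Rightarrow> 'a rel" where
  "list_order L = {(L ! i, L ! j) | i j. i \<le> j \<and> j < length L}"

lemma linear_order_on_list_order:
  assumes "distinct L"
  shows "linear_order_on (set L) (list_order L)"
proof -
  have mem: "(x, y) \<in> list_order L \<longleftrightarrow> (\<exists>i j. i \<le> j \<and> j < length L \<and> x = L ! i \<and> y = L ! j)"
    for x y
    unfolding list_order_def by blast
  have "refl_on (set L) (list_order L)"
    unfolding refl_on_def mem by (auto simp: in_set_conv_nth) (metis order_refl)+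
  moreover have "trans (list_order L)"
    unfolding trans_def mem using assms nth_eq_iff_index_eq
    by (smt (verit, ccfv_SIG) le_trans order.strict_trans1 linorder_not_less)
  moreover have "antisym (list_order L)"
    unfolding antisym_def mem using assms nth_eq_iff_index_eq
    by (smt (verit) le_antisym order.strict_trans1 linorder_not_less)
  moreover have "total_on (set L) (list_order L)"
    unfolding total_on_def
  proof (intro ballI impI)
    fix x y assume "x \<in> set L" "y \<in> set L"
    then obtain i j where "i < length L" "j < length L" "x = L ! i" "y = L ! j"
      by (auto simp: in_set_conv_nth)
    then show "(x, y) \<in> list_order L \<or> (y, x) \<in> list_order L"
      unfolding mem by (metis nat_le_linear)
  qed
  moreover have "list_order L \<subseteq> set L \<times> set L" unfolding list_order_def by auto
  ultimately show ?thesis by (simp add: linear_order_on_def partial_order_on_def preorder_on_def)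
qed

lemma list_order_hd: "L \<noteq> [] \<Longrightarrow> f \<in> set L \<Longrightarrow> (hd L, f) \<in> list_order L"
  unfolding list_order_def by (auto simp: in_set_conv_nth hd_conv_nth)

lemma list_order_last:
  assumes "L \<noteq> []" "f \<in> set L"
  shows "(f, last L) \<in> list_order L"
proof -
  obtain i where "i < length L" "f = L ! i" using assms(2) by (auto simp: in_set_conv_nth)
  then show ?thesis unfolding list_order_def using assms(1)
    by (intro CollectI exI[of _ i] exI[of _ "length L - 1"]) (auto simp: last_conv_nth)
qed

lemma list_order_second:
  assumes "f \<in> set (a # b # L)" "f \<noteq> a"
  shows "(b, f) \<in> list_order (a # b # L)"
proof -
  obtain j where j: "j < length (a # b # L)" "f = (a # b # L) ! j"
    using assms(1) unfolding in_set_conv_nth by blast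
  with assms(2) have "j \<ge> 1" by (cases j) auto
  then show ?thesis
    unfolding list_order_def using j by (intro CollectI exI[of _ 1] exI[of _ j]) auto
qed

definition enumeration :: "'a set \<Rightarrow> 'a list" where
  "enumeration A = (SOME xs. distinct xs \<and> set xs = A)"

lemma enumeration: "finite A \<Longrightarrow> distinct (enumeration A) \<and> set (enumeration A) = A"
  unfolding enumeration_def by (rule someI_ex) (use finite_distinct_list in blast)

definition order_first_last :: "'a set \<Rightarrow> 'a \<Rightarrow> 'a \<Rightarrow> 'a rel" where
  "order_first_last A a b = list_order (a # enumeration (A - {a, b}) @ [b])"

definition order_first_second :: "'a set \<Rightarrow> 'a \<Rightarrow> 'a \<Rightarrow> 'a rel" where
  "order_first_second A a b = list_order (a # b # enumeration (A - {a, b}))"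

lemma order_first_last:
  assumes "finite A" "a \<in> A" "b \<in> A" "a \<noteq> b"
  shows "linear_order_on A (order_first_last A a b)"
    "\<forall>f\<in>A. (a, f) \<in> order_first_last A a b" "\<forall>f\<in>A. (f, b) \<in> order_first_last A a b"
proof -
  define L where "L = a # enumeration (A - {a, b}) @ [b]"
  have L: "distinct L" "set L = A" "order_first_last A a b = list_order L"
    using enumeration[of "A - {a, b}"] assms by (auto simp: L_def order_first_last_def)
  show "linear_order_on A (order_first_last A a b)"
    using linear_order_on_list_order[OF L(1)] L by simp
  have "L \<noteq> []" "hd L = a" "last L = b" by (simp_all add: L_def)
  then show "\<forall>f\<in>A. (a, f) \<in> order_first_last A a b" "\<forall>f\<in>A. (f, b) \<in> order_first_last A a b"
    using list_order_hd[of L] list_order_last[of L] L(2,3) by auto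
qed

lemma order_first_second:
  assumes "finite A" "a \<in> A" "b \<in> A" "a \<noteq> b"
  shows "linear_order_on A (order_first_second A a b)"
    "\<forall>f\<in>A. (a, f) \<in> order_first_second A a b" "\<forall>f\<in>A - {a}. (b, f) \<in> order_first_second A a b"
proof -
  define L where "L = a # b # enumeration (A - {a, b})"
  have L: "distinct L" "set L = A" "order_first_second A a b = list_order L"
    using enumeration[of "A - {a, b}"] assms by (auto simp: L_def order_first_second_def)
  show "linear_order_on A (order_first_second A a b)"
    using linear_order_on_list_order[OF L(1)] L by simp
  have "L \<noteq> []" "hd L = a" by (simp_all add: L_def)
  then show "\<forall>f\<in>A. (a, f) \<in> order_first_second A a b"
    using list_order_hd[of L] L(2,3) by auto
  show "\<forall>f\<in>A - {a}. (b, f) \<in> order_first_second A a b"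
    using list_order_second[of _ a b "enumeration (A - {a, b})"] L(2,3) unfolding L_def by blast
qed

section \<open>The path space\<close>

lemma pathsD:
  assumes "x \<in> paths E src rng v0"
  shows "x i \<in> E (Suc i)" "src 1 (x 0) = v0"
    "rng (Suc i) (x i) = src (Suc (Suc i)) (x (Suc i))"
  using assms unfolding paths_def by auto

lemma paths_src_in_V:
  assumes "bratteli V E src rng v0" "x \<in> paths E src rng v0"
  shows "src (Suc i) (x i) \<in> V i"
  using assms pathsD(1)[OF assms(2)] unfolding bratteli_def
  by (metis diff_Suc_1 le_add1 plus_1_eq_Suc)

lemma topspace_path_top [simp]: "topspace (path_top E src rng v0) = paths E src rng v0"
  unfolding path_top_def by (auto simp: paths_def PiE_def extensional_def)

lemma openin_cylinder:
  "openin (path_top E src rng v0) {y \<in> paths E src rng v0. \<forall>j<M. y j = x j}"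
proof -
  let ?P = "product_topology (\<lambda>i. discrete_topology (E (Suc i))) UNIV"
  have P: "openin ?P {y \<in> topspace ?P. \<forall>j<M. y j = x j}"
  proof (induction M)
    case 0
    show ?case using openin_topspace[of ?P] by simp
  next
    case (Suc M)
    have "{y \<in> topspace ?P. \<forall>j<Suc M. y j = x j} =
       {y \<in> topspace ?P. \<forall>j<M. y j = x j} \<inter> {y \<in> topspace ?P. y M \<in> {x M} \<inter> E (Suc M)}"
      by (auto simp: less_Suc_eq PiE_iff)
    moreover have "openin ?P {y \<in> topspace ?P. y M \<in> {x M} \<inter> E (Suc M)}"
      by (rule openin_continuous_map_preimage[OF continuous_map_product_projection]) auto
    ultimately show ?case using Suc by (simp add: openin_Int)
  qed
  have "paths E src rng v0 \<subseteq> topspace ?P"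
    by (auto simp: paths_def PiE_iff)
  then have "{y \<in> paths E src rng v0. \<forall>j<M. y j = x j} =
      {y \<in> topspace ?P. \<forall>j<M. y j = x j} \<inter> paths E src rng v0"
    by blast
  then show ?thesis unfolding path_top_def openin_subtopology using P by blast
qed

lemma continuous_map_path_topI:
  assumes "\<And>x. x \<in> paths E src rng v0 \<Longrightarrow> f x \<in> paths E src rng v0"
    and "\<And>x i. x \<in> paths E src rng v0 \<Longrightarrow>
      \<exists>M. \<forall>y\<in>paths E src rng v0. (\<forall>j<M. y j = x j) \<longrightarrow> f y i = f x i"
  shows "continuous_map (path_top E src rng v0) (path_top E src rng v0) f"
proof -
  let ?X = "path_top E src rng v0"
  let ?P = "product_topology (\<lambda>i. discrete_topology (E (Suc i))) UNIV"
  have "continuous_map ?X (discrete_topology (E (Suc k))) (\<lambda>x. f x k)" for k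
    unfolding continuous_map
  proof (intro conjI allI impI)
    show "(\<lambda>x. f x k) ` topspace ?X \<subseteq> topspace (discrete_topology (E (Suc k)))"
      using assms(1) by (auto intro: pathsD(1))
    fix U
    show "openin ?X {x \<in> topspace ?X. f x k \<in> U}"
    proof (subst openin_subopen, intro ballI)
      fix x assume x: "x \<in> {x \<in> topspace ?X. f x k \<in> U}"
      then obtain M where M: "\<forall>y\<in>paths E src rng v0. (\<forall>j<M. y j = x j) \<longrightarrow> f y k = f x k"
        using assms(2)[of x k] by auto
      have "{y \<in> paths E src rng v0. \<forall>j<M. y j = x j} \<subseteq> {x \<in> topspace ?X. f x k \<in> U}"
      proof
        fix y assume "y \<in> {y \<in> paths E src rng v0. \<forall>j<M. y j = x j}"
        then have "y \<in> paths E src rng v0" "f y k = f x k" using M by auto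
        then show "y \<in> {x \<in> topspace ?X. f x k \<in> U}" using x by simp
      qed
      moreover have "x \<in> {y \<in> paths E src rng v0. \<forall>j<M. y j = x j}" using x by simp
      ultimately show "\<exists>T. openin ?X T \<and> x \<in> T \<and> T \<subseteq> {x \<in> topspace ?X. f x k \<in> U}"
        by (intro exI[of _ "{y \<in> paths E src rng v0. \<forall>j<M. y j = x j}"] conjI openin_cylinder)
    qed
  qed
  then have "continuous_map ?X ?P f"
    unfolding continuous_map_componentwise_UNIV by simp
  then have "continuous_map ?X (subtopology ?P (paths E src rng v0)) f"
    unfolding continuous_map_in_subtopology using assms(1) by (simp add: Pi_iff)
  then show ?thesis by (simp only: path_top_def)
qed

lemma continuous_map_path_topD:
  assumes "continuous_map (path_top E src rng v0) (path_top E src rng v0) f"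
    and "x \<in> paths E src rng v0"
  shows "\<exists>M. \<forall>y\<in>paths E src rng v0. (\<forall>j<M. y j = x j) \<longrightarrow> f y c = f x c"
proof -
  let ?X = "path_top E src rng v0"
  let ?P = "product_topology (\<lambda>i. discrete_topology (E (Suc i))) UNIV"
  have "continuous_map ?X (discrete_topology (E (Suc c))) (\<lambda>y. y c)"
    unfolding path_top_def
    by (rule continuous_map_from_subtopology, rule continuous_map_product_projection) simp
  then have "continuous_map ?X (discrete_topology (E (Suc c))) (\<lambda>x. f x c)"
    using continuous_map_compose[OF assms(1)] by (simp add: o_def)
  moreover have "f x c \<in> E (Suc c)"
    using continuous_map_image_subset_topspace[OF assms(1)] assms(2) pathsD(1) by fastforce
  ultimately have "openin ?X {y \<in> topspace ?X. f y c \<in> {f x c}}"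
    by (intro openin_continuous_map_preimage) auto
  then obtain T where
    T: "openin ?P T" "{y \<in> paths E src rng v0. f y c = f x c} = T \<inter> paths E src rng v0"
    unfolding path_top_def openin_subtopology by (auto simp: path_top_def[symmetric])
  then have "x \<in> T" using assms(2) by blast
  from product_topology_open_contains_basis[OF T(1) this] obtain X where
    X: "x \<in> (\<Pi>\<^sub>E i\<in>UNIV. X i)" "finite {i. X i \<noteq> topspace (discrete_topology (E (Suc i)))}"
       "(\<Pi>\<^sub>E i\<in>UNIV. X i) \<subseteq> T"
    by blast
  define J where "J = {i. X i \<noteq> E (Suc i)}"
  have "finite J" using X(2) by (simp add: J_def)
  then obtain M where M: "\<And>j. j \<in> J \<Longrightarrow> j < M" by (meson finite_nat_set_iff_bounded)
  show ?thesis
  proof (intro exI ballI impI)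
    fix y assume y: "y \<in> paths E src rng v0" "\<forall>j<M. y j = x j"
    have "y i \<in> X i" for i
      using M y X(1) pathsD(1)[OF y(1), of i] by (cases "i \<in> J") (auto simp: J_def)
    then have "y \<in> T" using X(3) by (auto simp: PiE_def extensional_def)
    then show "f y c = f x c" using T(2) y(1) by blast
  qed
qed

primrec initial_path ::
  "(nat \<Rightarrow> 'e set) \<Rightarrow> (nat \<Rightarrow> 'e \<Rightarrow> 'v) \<Rightarrow> (nat \<Rightarrow> 'e \<Rightarrow> 'v) \<Rightarrow> 'v \<Rightarrow> nat \<Rightarrow> (nat \<Rightarrow> 'e) \<Rightarrow> 'v \<Rightarrow> bool"
  where
    "initial_path E src rng v0 0 p u \<longleftrightarrow> u = v0"
  | "initial_path E src rng v0 (Suc m) p u \<longleftrightarrow>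
      p m \<in> E (Suc m) \<and> rng (Suc m) (p m) = u \<and> initial_path E src rng v0 m p (src (Suc m) (p m))"

lemma initial_path_cong:
  "(\<And>i. i < m \<Longrightarrow> p i = q i) \<Longrightarrow> initial_path E src rng v0 m p u = initial_path E src rng v0 m q u"
  by (induction m arbitrary: u) auto

lemma initial_pathD:
  assumes "initial_path E src rng v0 m p u" "i < m"
  shows "p i \<in> E (Suc i)"
    "rng (Suc i) (p i) = (if Suc i < m then src (Suc (Suc i)) (p (Suc i)) else u)"
  using assms by (induction m arbitrary: u) (auto simp: less_Suc_eq)

lemma initial_path_starts_at_top:
  "initial_path E src rng v0 m p u \<Longrightarrow> 0 < m \<Longrightarrow> src 1 (p 0) = v0"
proof (induction m arbitrary: u)
  case (Suc m)
  then show ?case by (cases m) auto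
qed simp

lemma initial_path_paths:
  "x \<in> paths E src rng v0 \<Longrightarrow> initial_path E src rng v0 k x (src (Suc k) (x k))"
  using pathsD(2)[of x] by (induction k) (auto simp: pathsD(1,3))

lemma splice_in_paths:
  assumes "initial_path E src rng v0 k p (src (Suc k) (z k))"
    and "\<And>i. k \<le> i \<Longrightarrow> z i \<in> E (Suc i)"
    and "\<And>i. k \<le> i \<Longrightarrow> rng (Suc i) (z i) = src (Suc (Suc i)) (z (Suc i))"
  shows "(\<lambda>i. if i < k then p i else z i) \<in> paths E src rng v0"
proof -
  have "src 1 (if 0 < k then p 0 else z 0) = v0"
    using assms(1) initial_path_starts_at_top[OF assms(1)] by (cases k) auto
  moreover have "rng (Suc i) (if i < k then p i else z i) =
      src (Suc (Suc i)) (if Suc i < k then p (Suc i) else z (Suc i))" for i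
  proof -
    consider "Suc i < k" | "Suc i = k" | "k \<le> i" by linarith
    then show ?thesis using initial_pathD(2)[OF assms(1), of i] assms(3)[of i] by cases auto
  qed
  ultimately show ?thesis
    unfolding paths_def using initial_pathD(1)[OF assms(1)] assms(2) by auto
qed

section \<open>Ordered Bratteli diagrams\<close>

lemma is_min_edge_converse [simp]:
  "is_min_edge E rng (\<lambda>p. (\<omega> p)\<inverse>) n e \<longleftrightarrow> is_max_edge E rng \<omega> n e"
  by (simp add: is_min_edge_def is_max_edge_def)

lemma is_max_edge_converse [simp]:
  "is_max_edge E rng (\<lambda>p. (\<omega> p)\<inverse>) n e \<longleftrightarrow> is_min_edge E rng \<omega> n e"
  by (simp add: is_min_edge_def is_max_edge_def)

lemma max_paths_converse: "max_paths E src rng v0 \<omega> = min_paths E src rng v0 (\<lambda>p. (\<omega> p)\<inverse>)"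
  unfolding max_paths_def min_paths_def by simp

lemma is_max_edge_eqI:
  assumes "linear_order_on (in_edges E rng n v) (\<omega> (n, v))" "b \<in> in_edges E rng n v"
    "\<forall>f\<in>in_edges E rng n v. (f, b) \<in> \<omega> (n, v)" "e \<in> E n" "rng n e = v" "is_max_edge E rng \<omega> n e"
  shows "e = b"
  using assms linear_order_on_greatest_unique[OF assms(1,2) _ assms(3), of e]
  by (auto simp: is_max_edge_def in_edges_def)

lemma is_min_edge_eqI:
  assumes "linear_order_on (in_edges E rng n v) (\<omega> (n, v))" "a \<in> in_edges E rng n v"
    "\<forall>f\<in>in_edges E rng n v. (a, f) \<in> \<omega> (n, v)" "e \<in> E n" "rng n e = v" "is_min_edge E rng \<omega> n e"
  shows "e = a"
  using assms linear_order_on_least_unique[OF assms(1,2) _ assms(3), of e]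
  by (auto simp: is_min_edge_def in_edges_def)

lemma finite_in_edges: "bratteli V E src rng v0 \<Longrightarrow> 1 \<le> n \<Longrightarrow> finite (in_edges E rng n v)"
  by (auto simp: bratteli_def in_edges_def)

locale ordered_bratteli =
  fixes V :: "nat \<Rightarrow> 'v set" and E :: "nat \<Rightarrow> 'e set" and src rng :: "nat \<Rightarrow> 'e \<Rightarrow> 'v"
    and v0 :: 'v and \<omega> :: "nat \<times> 'v \<Rightarrow> 'e rel"
  assumes diagram: "bratteli V E src rng v0"
    and linear: "\<And>n v. 1 \<le> n \<Longrightarrow> v \<in> V n \<Longrightarrow> linear_order_on (in_edges E rng n v) (\<omega> (n, v))"
begin

lemma V_0: "V 0 = {v0}" using diagram by (simp add: bratteli_def)

lemma in_edges_nonempty: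
  assumes "1 \<le> n" "v \<in> V n"
  shows "in_edges E rng n v \<noteq> {}"
proof -
  from diagram have "\<forall>n\<ge>1. \<forall>v\<in>V n. \<exists>e\<in>E n. rng n e = v" by (simp add: bratteli_def)
  then obtain e where "e \<in> E n" "rng n e = v" using assms by blast
  then show ?thesis by (auto simp: in_edges_def)
qed

lemma edge_vertices: "1 \<le> n \<Longrightarrow> e \<in> E n \<Longrightarrow> src n e \<in> V (n - 1) \<and> rng n e \<in> V n"
  using diagram by (auto simp: bratteli_def)

lemma edge_vertices_Suc: "e \<in> E (Suc n) \<Longrightarrow> src (Suc n) e \<in> V n \<and> rng (Suc n) e \<in> V (Suc n)"
  using edge_vertices[of "Suc n" e] by simp

lemma linear_at:
  "1 \<le> n \<Longrightarrow> e \<in> E n \<Longrightarrow> linear_order_on (in_edges E rng n (rng n e)) (\<omega> (n, rng n e))"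
  using linear edge_vertices by blast

lemma in_edgesI: "e \<in> E n \<Longrightarrow> e \<in> in_edges E rng n (rng n e)"
  by (simp add: in_edges_def)

lemma min_edge_exists:
  assumes "1 \<le> n" "v \<in> V n"
  shows "\<exists>e. e \<in> in_edges E rng n v \<and> is_min_edge E rng \<omega> n e"
proof -
  obtain m where m: "m \<in> in_edges E rng n v" "\<forall>f\<in>in_edges E rng n v. (m, f) \<in> \<omega> (n, v)"
    using linear_order_on_finite_has_least[OF linear[OF assms]
        finite_in_edges[OF diagram assms(1)] in_edges_nonempty[OF assms]]
    by blast
  then have "rng n m = v" by (simp add: in_edges_def)
  then show ?thesis using m by (auto simp: is_min_edge_def)
qed

lemma min_edge_unique:
  assumes "1 \<le> n" "e1 \<in> in_edges E rng n v" "e2 \<in> in_edges E rng n v"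
    "is_min_edge E rng \<omega> n e1" "is_min_edge E rng \<omega> n e2"
  shows "e1 = e2"
proof -
  have r: "rng n e1 = v" "rng n e2 = v" "v \<in> V n"
    using assms(2,3) edge_vertices[OF assms(1)] by (auto simp: in_edges_def)
  have "(e1, e2) \<in> \<omega> (n, v)" "(e2, e1) \<in> \<omega> (n, v)" using assms r by (auto simp: is_min_edge_def)
  then show ?thesis using linear_order_on_antisym[OF linear[OF assms(1) r(3)]] by blast
qed

definition min_edge :: "nat \<Rightarrow> 'v \<Rightarrow> 'e" where
  "min_edge n v = (THE e. e \<in> in_edges E rng n v \<and> is_min_edge E rng \<omega> n e)"

lemma min_edge:
  assumes "1 \<le> n" "v \<in> V n"
  shows "min_edge n v \<in> in_edges E rng n v \<and> is_min_edge E rng \<omega> n (min_edge n v)"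
proof -
  have "\<exists>!e. e \<in> in_edges E rng n v \<and> is_min_edge E rng \<omega> n e"
    using min_edge_exists[OF assms] min_edge_unique[OF assms(1)] by blast
  then show ?thesis unfolding min_edge_def by (rule theI')
qed

lemma min_edge_eqI:
  assumes "1 \<le> n" "v \<in> V n" "e \<in> in_edges E rng n v" "is_min_edge E rng \<omega> n e"
  shows "min_edge n v = e"
  using min_edge_unique[OF assms(1) _ assms(3) _ assms(4)] min_edge[OF assms(1,2)] by blast

primrec min_path :: "nat \<Rightarrow> 'v \<Rightarrow> nat \<Rightarrow> 'e" where
  "min_path 0 u = (\<lambda>i. undefined)"
| "min_path (Suc m) u = (min_path m (src (Suc m) (min_edge (Suc m) u))) (m := min_edge (Suc m) u)"

declare min_path.simps(2)[simp del]

lemma min_path: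
  "u \<in> V m \<Longrightarrow> initial_path E src rng v0 m (min_path m u) u \<and>
    (\<forall>i<m. is_min_edge E rng \<omega> (Suc i) (min_path m u i))"
proof (induction m arbitrary: u)
  case (Suc m)
  define e where "e = min_edge (Suc m) u"
  have e: "e \<in> E (Suc m)" "rng (Suc m) e = u" "is_min_edge E rng \<omega> (Suc m) e"
    using min_edge[of "Suc m" u] Suc.prems by (auto simp: e_def in_edges_def)
  have "src (Suc m) e \<in> V m" using edge_vertices_Suc[OF e(1)] by simp
  note IH = Suc.IH[OF this]
  have mp: "min_path (Suc m) u m = e"
    "\<And>i. i < m \<Longrightarrow> min_path (Suc m) u i = min_path m (src (Suc m) e) i"
    by (simp_all add: e_def min_path.simps(2))
  have "initial_path E src rng v0 m (min_path (Suc m) u) (src (Suc m) e)"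
    using IH mp(2) by (subst initial_path_cong[of m _ "min_path m (src (Suc m) e)"]) simp_all
  then have "initial_path E src rng v0 (Suc m) (min_path (Suc m) u) u"
    using e mp(1) by simp
  moreover have "is_min_edge E rng \<omega> (Suc i) (min_path (Suc m) u i)" if "i < Suc m" for i
    using that IH e(3) mp by (cases "i = m") auto
  ultimately show ?case by blast
qed (simp add: V_0)

lemma min_path_unique:
  "initial_path E src rng v0 m p u \<Longrightarrow> (\<And>i. i < m \<Longrightarrow> is_min_edge E rng \<omega> (Suc i) (p i)) \<Longrightarrow>
    i < m \<Longrightarrow> p i = min_path m u i"
proof (induction m arbitrary: u)
  case (Suc m)
  then have pm: "p m \<in> E (Suc m)" "rng (Suc m) (p m) = u" by auto
  then have "min_edge (Suc m) u = p m"
    using min_edge_eqI[of "Suc m" u "p m"] Suc.prems edge_vertices_Suc by (auto simp: in_edges_def)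
  then show ?case using Suc by (auto simp: less_Suc_eq min_path.simps(2))
qed simp

lemma succ_edge_exists:
  assumes "1 \<le> n" "e \<in> E n" "\<not> is_max_edge E rng \<omega> n e"
  shows "\<exists>e'. is_succ_edge E rng \<omega> n e e'"
proof -
  define v where "v = rng n e"
  define A where "A = in_edges E rng n v"
  define G where "G = {g\<in>A. (e, g) \<in> \<omega> (n, v) \<and> g \<noteq> e}"
  have L: "linear_order_on A (\<omega> (n, v))" using linear_at[OF assms(1,2)] by (simp add: A_def v_def)
  have eA: "e \<in> A" by (simp add: A_def v_def in_edgesI assms(2))
  obtain f where f: "f \<in> A" "(f, e) \<notin> \<omega> (n, v)"
    using assms(3) by (auto simp: is_max_edge_def A_def v_def)
  then have "f \<in> G"
    using linear_order_on_total[OF L eA f(1)] L eA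
    by (auto simp: G_def linear_order_on_def partial_order_on_def preorder_on_def refl_on_def)
  moreover have "finite G" using finite_in_edges[OF diagram assms(1)] by (simp add: G_def A_def)
  moreover have "G \<subseteq> A" by (auto simp: G_def)
  ultimately obtain m where "m \<in> G" "\<forall>g\<in>G. (m, g) \<in> \<omega> (n, v)"
    using linear_order_on_finite_has_least[OF L] by blast
  then have "is_succ_edge E rng \<omega> n e m" by (simp add: is_succ_edge_def G_def A_def v_def)
  then show ?thesis by blast
qed

lemma is_succ_edge_unique:
  assumes "1 \<le> n" "e \<in> E n" "is_succ_edge E rng \<omega> n e e1" "is_succ_edge E rng \<omega> n e e2"
  shows "e1 = e2"
proof -
  have "(e1, e2) \<in> \<omega> (n, rng n e)" "(e2, e1) \<in> \<omega> (n, rng n e)"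
    using assms(3,4) unfolding is_succ_edge_def by auto
  then show ?thesis using linear_order_on_antisym[OF linear_at[OF assms(1,2)]] by blast
qed

lemma is_succ_edgeD:
  assumes "is_succ_edge E rng \<omega> n e e'"
  shows "e' \<in> E n" "rng n e' = rng n e" "(e, e') \<in> \<omega> (n, rng n e)" "e' \<noteq> e"
  using assms unfolding is_succ_edge_def in_edges_def by auto

lemma succ_edge_not_max:
  assumes "1 \<le> n" "e \<in> E n" "is_succ_edge E rng \<omega> n e e'"
  shows "\<not> is_max_edge E rng \<omega> n e"
proof
  assume "is_max_edge E rng \<omega> n e"
  then have "(e', e) \<in> \<omega> (n, rng n e)"
    using is_succ_edgeD[OF assms(3)] unfolding is_max_edge_def in_edges_def by auto
  then show False
    using is_succ_edgeD[OF assms(3)] linear_order_on_antisym[OF linear_at[OF assms(1,2)]] by auto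
qed

lemma succ_edge_not_min:
  assumes "1 \<le> n" "e \<in> E n" "is_succ_edge E rng \<omega> n e e'"
  shows "\<not> is_min_edge E rng \<omega> n e'"
proof
  assume mn: "is_min_edge E rng \<omega> n e'"
  note sp = is_succ_edgeD[OF assms(3)]
  have "(e', e) \<in> \<omega> (n, rng n e)" using mn sp assms(2) unfolding is_min_edge_def
    by (metis in_edgesI)
  then show False using sp linear_order_on_antisym[OF linear_at[OF assms(1,2)]] by blast
qed

lemma is_succ_edge_converse:
  assumes "1 \<le> n" "e \<in> E n" "is_succ_edge E rng \<omega> n e e'"
  shows "is_succ_edge E rng (\<lambda>p. (\<omega> p)\<inverse>) n e' e"
proof -
  note sp = is_succ_edgeD[OF assms(3)]
  have L: "linear_order_on (in_edges E rng n (rng n e)) (\<omega> (n, rng n e))"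
    using linear_at[OF assms(1,2)] .
  have eA: "e \<in> in_edges E rng n (rng n e)" using assms(2) by (rule in_edgesI)
  have "\<forall>f\<in>in_edges E rng n (rng n e). (f, e') \<in> \<omega> (n, rng n e) \<and> f \<noteq> e' \<longrightarrow> (f, e) \<in> \<omega> (n, rng n e)"
  proof (intro ballI impI)
    fix f assume f: "f \<in> in_edges E rng n (rng n e)" "(f, e') \<in> \<omega> (n, rng n e) \<and> f \<noteq> e'"
    show "(f, e) \<in> \<omega> (n, rng n e)"
    proof (rule ccontr)
      assume nf: "(f, e) \<notin> \<omega> (n, rng n e)"
      then have "(e, f) \<in> \<omega> (n, rng n e)" using linear_order_on_total[OF L eA f(1)] by blast
      moreover have "f \<noteq> e" using nf L eA
        by (auto simp: linear_order_on_def partial_order_on_def preorder_on_def refl_on_def)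
      ultimately have "(e', f) \<in> \<omega> (n, rng n e)"
        using assms(3) f(1) unfolding is_succ_edge_def by blast
      then show False using f(2) linear_order_on_antisym[OF L] by blast
    qed
  qed
  then show ?thesis unfolding is_succ_edge_def using sp eA by (simp add: in_edges_def)
qed

end

section \<open>Orderings whose extreme edges funnel through single vertices are perfect\<close>

locale funnelled_ordering = ordered_bratteli V E src rng v0 \<omega>
  for V :: "nat \<Rightarrow> 'v set" and E :: "nat \<Rightarrow> 'e set" and src rng :: "nat \<Rightarrow> 'e \<Rightarrow> 'v"
    and v0 :: 'v and \<omega> :: "nat \<times> 'v \<Rightarrow> 'e rel" +
  fixes N :: nat and a b :: "nat \<Rightarrow> 'v"
  assumes funnel_vertices: "\<And>m. N \<le> m \<Longrightarrow> a m \<in> V m \<and> b m \<in> V m"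
    and src_max_edge: "\<And>n e. N < n \<Longrightarrow> e \<in> E n \<Longrightarrow> is_max_edge E rng \<omega> n e \<Longrightarrow> src n e = a (n - 1)"
    and src_min_edge: "\<And>n e. N < n \<Longrightarrow> e \<in> E n \<Longrightarrow> is_min_edge E rng \<omega> n e \<Longrightarrow> src n e = b (n - 1)"
begin

lemma converse: "funnelled_ordering V E src rng v0 (\<lambda>p. (\<omega> p)\<inverse>) N b a"
  using diagram linear funnel_vertices src_max_edge src_min_edge
  by unfold_locales auto

lemma min_path_Suc_funnel:
  assumes "N < Suc m" "u \<in> V (Suc m)" "i < m"
  shows "min_path (Suc m) u i = min_path m (b m) i"
proof -
  have "src (Suc m) (min_edge (Suc m) u) = b m"
    using min_edge[of "Suc m" u] src_min_edge[of "Suc m"] assms by (auto simp: in_edges_def)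
  then show ?thesis using assms(3) by (simp add: min_path.simps(2))
qed

definition least_path :: "nat \<Rightarrow> 'e" where
  "least_path i = min_path (i + N + 1) (b (i + N + 1)) i"

lemma min_path_funnel_eq_least_path:
  assumes "N \<le> m" "i < m"
  shows "min_path m (b m) i = least_path i"
proof -
  have stable: "min_path m' (b m') i = min_path m (b m) i" if "N \<le> m" "i < m" "m \<le> m'" for m m'
    using that(3)
  proof (induction m' rule: dec_induct)
    case (step k)
    then show ?case
      using min_path_Suc_funnel[of k "b (Suc k)" i] funnel_vertices[of "Suc k"] that by simp
  qed simp
  show ?thesis
    using stable[of m "max m (i + N + 1)"] stable[of "i + N + 1" "max m (i + N + 1)"] assms
    by (simp add: least_path_def)
qed

lemma min_path_eq_least_path:
  assumes "N < m" "u \<in> V m" "i + 1 < m"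
  shows "min_path m u i = least_path i"
proof -
  obtain m' where "m = Suc m'" using assms(1) by (cases m) auto
  then show ?thesis
    using min_path_Suc_funnel[of m' u i] min_path_funnel_eq_least_path[of m' i] assms by simp
qed

lemma least_path: "least_path \<in> min_paths E src rng v0 \<omega>"
proof -
  define m where "m i = i + N + 2" for i
  have mp: "initial_path E src rng v0 (m i) (min_path (m i) (b (m i))) (b (m i))"
    "\<forall>j<m i. is_min_edge E rng \<omega> (Suc j) (min_path (m i) (b (m i)) j)" for i
    using min_path[of "b (m i)" "m i"] funnel_vertices[of "m i"] by (simp_all add: m_def)
  have lp: "least_path j = min_path (m i) (b (m i)) j" if "j \<le> Suc i" for i j
    using min_path_funnel_eq_least_path[of "m i" j] that by (simp add: m_def)
  have "least_path i \<in> E (Suc i)" "is_min_edge E rng \<omega> (Suc i) (least_path i)"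
    "rng (Suc i) (least_path i) = src (Suc (Suc i)) (least_path (Suc i))" for i
  proof -
    have "i < m i" "Suc i < m i" by (simp_all add: m_def)
    then show "least_path i \<in> E (Suc i)" "is_min_edge E rng \<omega> (Suc i) (least_path i)"
      "rng (Suc i) (least_path i) = src (Suc (Suc i)) (least_path (Suc i))"
      using initial_pathD[OF mp(1)[of i], of i] mp(2)[of i] lp[of i i] lp[of "Suc i" i] by simp_all
  qed
  moreover have "src 1 (least_path 0) = v0"
    using initial_path_starts_at_top[OF mp(1)[of 0]] lp[of 0 0] by (simp add: m_def)
  ultimately show ?thesis unfolding min_paths_def paths_def by blast
qed

lemma least_path_unique:
  assumes "x \<in> min_paths E src rng v0 \<omega>"
  shows "x = least_path"
proof
  fix i
  have x: "x \<in> paths E src rng v0" "\<And>j. is_min_edge E rng \<omega> (Suc j) (x j)"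
    using assms by (auto simp: min_paths_def)
  define m where "m = i + N + 2"
  define u where "u = src (Suc m) (x m)"
  have u: "u \<in> V m" using paths_src_in_V[OF diagram x(1)] by (simp add: u_def)
  have "x i = min_path m u i"
    using min_path_unique[OF initial_path_paths[OF x(1)]] x(2) by (simp add: u_def m_def)
  also have "\<dots> = least_path i" using min_path_eq_least_path[OF _ u] by (simp add: m_def)
  finally show "x i = least_path i" .
qed

lemma min_paths_eq: "min_paths E src rng v0 \<omega> = {least_path}"
  using least_path least_path_unique by blast

definition first_nonmax :: "(nat \<Rightarrow> 'e) \<Rightarrow> nat" where
  "first_nonmax x = (LEAST i. \<not> is_max_edge E rng \<omega> (Suc i) (x i))"

definition succ_of :: "nat \<Rightarrow> 'e \<Rightarrow> 'e" where
  "succ_of n e = (THE e'. is_succ_edge E rng \<omega> n e e')"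

definition vershik :: "(nat \<Rightarrow> 'e) \<Rightarrow> nat \<Rightarrow> 'e" where
  "vershik x = (if \<forall>i. is_max_edge E rng \<omega> (Suc i) (x i) then least_path
     else let k = first_nonmax x; s = succ_of (Suc k) (x k)
       in (\<lambda>i. if i < k then min_path k (src (Suc k) s) i else if i = k then s else x i))"

lemma succ_of:
  assumes "e \<in> E (Suc k)" "\<not> is_max_edge E rng \<omega> (Suc k) e"
  shows "is_succ_edge E rng \<omega> (Suc k) e (succ_of (Suc k) e)"
proof -
  have "\<exists>!e'. is_succ_edge E rng \<omega> (Suc k) e e'"
    using succ_edge_exists[of "Suc k" e] is_succ_edge_unique[of "Suc k" e] assms by auto
  then show ?thesis unfolding succ_of_def by (rule theI')
qed

lemma succ_of_eqI:
  assumes "e \<in> E (Suc k)" "is_succ_edge E rng \<omega> (Suc k) e e'"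
  shows "succ_of (Suc k) e = e'"
  using succ_of[OF assms(1) succ_edge_not_max[OF _ assms]] is_succ_edge_unique[of "Suc k" e] assms
  by auto

lemma first_nonmax:
  assumes "\<not> (\<forall>i. is_max_edge E rng \<omega> (Suc i) (x i))"
  shows "\<not> is_max_edge E rng \<omega> (Suc (first_nonmax x)) (x (first_nonmax x))"
    "\<And>i. i < first_nonmax x \<Longrightarrow> is_max_edge E rng \<omega> (Suc i) (x i)"
proof -
  obtain j where "\<not> is_max_edge E rng \<omega> (Suc j) (x j)" using assms by blast
  then show "\<not> is_max_edge E rng \<omega> (Suc (first_nonmax x)) (x (first_nonmax x))"
    unfolding first_nonmax_def by (rule LeastI)
  show "\<And>i. i < first_nonmax x \<Longrightarrow> is_max_edge E rng \<omega> (Suc i) (x i)"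
    unfolding first_nonmax_def using not_less_Least by blast
qed

lemma first_nonmax_eqI:
  assumes "\<And>i. i < k \<Longrightarrow> is_max_edge E rng \<omega> (Suc i) (x i)" "\<not> is_max_edge E rng \<omega> (Suc k) (x k)"
  shows "first_nonmax x = k"
  unfolding first_nonmax_def using assms by (intro Least_equality) (auto simp: not_less[symmetric])

lemma vershik_nonmax:
  assumes "\<not> (\<forall>i. is_max_edge E rng \<omega> (Suc i) (x i))"
    and "k = first_nonmax x" "s = succ_of (Suc k) (x k)"
  shows "vershik x = (\<lambda>i. if i < k then min_path k (src (Suc k) s) i else if i = k then s else x i)"
  unfolding vershik_def Let_def assms(2,3) using assms(1) by (simp only: if_False)

lemma vershik_nonmax_props:
  assumes x: "x \<in> paths E src rng v0" and nm: "\<not> (\<forall>i. is_max_edge E rng \<omega> (Suc i) (x i))"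
    and k: "k = first_nonmax x"
  shows "vershik x \<in> paths E src rng v0" "is_succ_edge E rng \<omega> (Suc k) (x k) (vershik x k)"
    "\<forall>i>k. vershik x i = x i" "\<forall>i<k. is_min_edge E rng \<omega> (Suc i) (vershik x i)"
proof -
  define s where "s = succ_of (Suc k) (x k)"
  have xk: "x k \<in> E (Suc k)" using pathsD(1)[OF x] .
  have ss: "is_succ_edge E rng \<omega> (Suc k) (x k) s"
    unfolding s_def using succ_of[OF xk] first_nonmax(1)[OF nm] k by simp
  note sp = is_succ_edgeD[OF ss]
  have mp: "initial_path E src rng v0 k (min_path k (src (Suc k) s)) (src (Suc k) s)"
    "\<forall>i<k. is_min_edge E rng \<omega> (Suc i) (min_path k (src (Suc k) s) i)"
    using min_path edge_vertices_Suc[OF sp(1)] by blast+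
  have y: "vershik x = (\<lambda>i. if i < k then min_path k (src (Suc k) s) i else (x(k := s)) i)"
    using vershik_nonmax[OF nm k s_def] by auto
  show "is_succ_edge E rng \<omega> (Suc k) (x k) (vershik x k)" "\<forall>i>k. vershik x i = x i"
    "\<forall>i<k. is_min_edge E rng \<omega> (Suc i) (vershik x i)"
    using ss mp(2) y by simp_all
  have "(\<lambda>i. if i < k then min_path k (src (Suc k) s) i else (x(k := s)) i) \<in> paths E src rng v0"
    using mp(1) sp pathsD[OF x] by (intro splice_in_paths) auto
  then show "vershik x \<in> paths E src rng v0" using y by simp
qed

lemma vershik_paths: "x \<in> paths E src rng v0 \<Longrightarrow> vershik x \<in> paths E src rng v0"
  using least_path vershik_nonmax_props(1)[OF _ _ refl]
  by (cases "\<forall>i. is_max_edge E rng \<omega> (Suc i) (x i)") (auto simp: vershik_def min_paths_def)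

text \<open>Close to the maximal path the first non-maximal edge lies deep down, and the minimal path
  leading to its successor agrees with \<open>least_path\<close> on the first levels.\<close>

lemma vershik_local_at_max:
  assumes x: "\<forall>i. is_max_edge E rng \<omega> (Suc i) (x i)"
    and y: "y \<in> paths E src rng v0" "\<forall>j<i + N + 3. y j = x j"
  shows "vershik y i = vershik x i"
proof (cases "\<forall>i. is_max_edge E rng \<omega> (Suc i) (y i)")
  case False
  define k where "k = first_nonmax y"
  define s where "s = succ_of (Suc k) (y k)"
  have nk: "\<not> is_max_edge E rng \<omega> (Suc k) (y k)"
    using first_nonmax(1)[OF False] by (simp add: k_def)
  then have kM: "i + N + 3 \<le> k" using x y(2) by (metis not_le)
  have "is_succ_edge E rng \<omega> (Suc k) (y k) s"
    unfolding s_def using succ_of[OF pathsD(1)[OF y(1)] nk] .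
  then have u: "src (Suc k) s \<in> V k" using edge_vertices_Suc[OF is_succ_edgeD(1)] by blast
  have "vershik y i = min_path k (src (Suc k) s) i"
    using vershik_nonmax[OF False k_def s_def] kM by simp
  also have "\<dots> = least_path i" using min_path_eq_least_path[OF _ u] kM by simp
  finally show ?thesis using x unfolding vershik_def by simp
qed (use x in \<open>simp add: vershik_def\<close>)

lemma vershik_local_at_nonmax:
  assumes x: "\<not> (\<forall>i. is_max_edge E rng \<omega> (Suc i) (x i))"
    and y: "\<forall>j<Suc (max (first_nonmax x) i). y j = x j"
  shows "vershik y i = vershik x i"
proof -
  define k where "k = first_nonmax x"
  have yx: "j \<le> k \<Longrightarrow> y j = x j" for j using y by (auto simp: k_def)
  have ky: "first_nonmax y = k"
    using first_nonmax[OF x] yx by (intro first_nonmax_eqI) (auto simp: k_def)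
  have "\<not> is_max_edge E rng \<omega> (Suc k) (y k)"
    using first_nonmax(1)[OF x] yx[of k] by (simp add: k_def)
  then have nmy: "\<not> (\<forall>i. is_max_edge E rng \<omega> (Suc i) (y i))" by blast
  show ?thesis
    unfolding vershik_nonmax[OF nmy ky[symmetric] refl] vershik_nonmax[OF x k_def refl]
    using yx[of k] y by (auto simp: k_def)
qed

lemma vershik_local:
  "\<exists>M. \<forall>y\<in>paths E src rng v0. (\<forall>j<M. y j = x j) \<longrightarrow> vershik y i = vershik x i"
proof (cases "\<forall>i. is_max_edge E rng \<omega> (Suc i) (x i)")
  case True
  then show ?thesis by (intro exI[of _ "i + N + 3"] ballI impI vershik_local_at_max)
next
  case False
  then show ?thesis
    by (intro exI[of _ "Suc (max (first_nonmax x) i)"] ballI impI vershik_local_at_nonmax)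
qed

lemma vershik_inverse:
  assumes x: "x \<in> paths E src rng v0"
  shows "funnelled_ordering.vershik E src rng (\<lambda>p. (\<omega> p)\<inverse>) N a (vershik x) = x"
proof -
  interpret c: funnelled_ordering V E src rng v0 "\<lambda>p. (\<omega> p)\<inverse>" N b a by (rule converse)
  show ?thesis
  proof (cases "\<forall>i. is_max_edge E rng \<omega> (Suc i) (x i)")
    case True
    then have "vershik x = least_path" "x = c.least_path"
      using c.least_path_unique x by (auto simp: vershik_def min_paths_def)
    then show ?thesis using least_path by (simp add: c.vershik_def min_paths_def)
  next
    case False
    define k where "k = first_nonmax x"
    define y where "y = vershik x"
    note P = vershik_nonmax_props[OF x False k_def, folded y_def]
    have xk: "x k \<in> E (Suc k)" using pathsD(1)[OF x] .
    have yk: "y k \<in> E (Suc k)" using is_succ_edgeD(1)[OF P(2)] .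
    have "\<not> is_min_edge E rng \<omega> (Suc k) (y k)" using succ_edge_not_min[OF _ xk P(2)] by simp
    then have cnm: "\<not> (\<forall>i. is_max_edge E rng (\<lambda>p. (\<omega> p)\<inverse>) (Suc i) (y i))"
      and ck: "c.first_nonmax y = k"
      using P(4) by (auto intro!: c.first_nonmax_eqI)
    have csc: "c.succ_of (Suc k) (y k) = x k"
      using c.succ_of_eqI[OF yk is_succ_edge_converse[OF _ xk P(2)]] by simp
    have "x i = c.min_path k (src (Suc k) (x k)) i" if "i < k" for i
      using c.min_path_unique[OF initial_path_paths[OF x] _ that] first_nonmax(2)[OF False]
      by (simp add: k_def)
    then show ?thesis
      unfolding y_def[symmetric] c.vershik_nonmax[OF cnm ck[symmetric] refl] csc
      using P(3) by (auto intro!: ext)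
  qed
qed

lemma vershik_max_paths: "vershik ` max_paths E src rng v0 \<omega> = min_paths E src rng v0 \<omega>"
proof -
  interpret c: funnelled_ordering V E src rng v0 "\<lambda>p. (\<omega> p)\<inverse>" N b a by (rule converse)
  have "max_paths E src rng v0 \<omega> = {c.least_path}"
    using c.min_paths_eq max_paths_converse[of E src rng v0 \<omega>] by simp
  moreover have "vershik c.least_path = least_path"
    using c.least_path unfolding vershik_def min_paths_def by simp
  ultimately show ?thesis using min_paths_eq by simp
qed

theorem vershik_map_vershik: "vershik_map E src rng v0 \<omega> vershik"
proof -
  interpret c: funnelled_ordering V E src rng v0 "\<lambda>p. (\<omega> p)\<inverse>" N b a by (rule converse)
  have "c.vershik (vershik x) = x" "vershik (c.vershik x) = x" if "x \<in> paths E src rng v0" for x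
    using vershik_inverse c.vershik_inverse[unfolded converse_converse] that by simp_all
  then have "homeomorphic_maps (path_top E src rng v0) (path_top E src rng v0) vershik c.vershik"
    unfolding homeomorphic_maps_def
    using continuous_map_path_topI[of E src rng v0 vershik, OF vershik_paths vershik_local]
      continuous_map_path_topI[of E src rng v0 c.vershik, OF c.vershik_paths c.vershik_local]
    by simp
  moreover have "let k = (LEAST i. \<not> is_max_edge E rng \<omega> (Suc i) (x i)) in
      is_succ_edge E rng \<omega> (Suc k) (x k) (vershik x k) \<and> (\<forall>i>k. vershik x i = x i) \<and>
      (\<forall>i<k. is_min_edge E rng \<omega> (Suc i) (vershik x i))"
    if "x \<in> paths E src rng v0 - max_paths E src rng v0 \<omega>" for x
    using that vershik_nonmax_props[OF _ _ refl, of x]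
    unfolding Let_def first_nonmax_def max_paths_def by auto
  ultimately show ?thesis
    unfolding vershik_map_def homeomorphic_map_maps using vershik_max_paths by blast
qed

end

section \<open>An obstruction to perfectness\<close>

lemma vershik_map_continuous:
  "vershik_map E src rng v0 \<omega> \<phi> \<Longrightarrow> continuous_map (path_top E src rng v0) (path_top E src rng v0) \<phi>"
  unfolding vershik_map_def using homeomorphic_imp_continuous_map by blast

context ordered_bratteli
begin

lemma max_path_through:
  assumes "\<And>m. N \<le> m \<Longrightarrow> p m \<in> V m"
    and max_p: "\<And>n e. N < n \<Longrightarrow> e \<in> E n \<Longrightarrow> rng n e = p n \<Longrightarrow> is_max_edge E rng \<omega> n e \<Longrightarrow>
      src n e = p (n - 1)"
  obtains x where "x \<in> max_paths E src rng v0 \<omega>" "\<And>i. N \<le> i \<Longrightarrow> src (Suc i) (x i) = p i"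
proof -
  interpret c: ordered_bratteli V E src rng v0 "\<lambda>p. (\<omega> p)\<inverse>"
    using diagram linear by unfold_locales auto
  define z where "z i = c.min_edge (Suc i) (p (Suc i))" for i
  have z: "z i \<in> E (Suc i)" "rng (Suc i) (z i) = p (Suc i)" "is_max_edge E rng \<omega> (Suc i) (z i)"
    "src (Suc i) (z i) = p i" if "N \<le> i" for i
    using c.min_edge[of "Suc i" "p (Suc i)"] max_p[of "Suc i" "z i"] assms(1)[of "Suc i"] that
    by (auto simp: z_def in_edges_def)
  note mp = c.min_path[OF assms(1)[OF order_refl]]
  define x where "x i = (if i < N then c.min_path N (p N) i else z i)" for i
  have "x \<in> paths E src rng v0"
    unfolding x_def using mp z by (intro splice_in_paths) auto
  moreover have "is_max_edge E rng \<omega> (Suc i) (x i)" for i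
    using mp z(3) by (auto simp: x_def)
  moreover have "src (Suc i) (x i) = p i" if "N \<le> i" for i
    using z(4)[OF that] that by (simp add: x_def)
  ultimately show ?thesis using that by (auto simp: max_paths_def)
qed

lemma min_edges_alternate:
  assumes min_p: "\<And>n e. N < n \<Longrightarrow> e \<in> E n \<Longrightarrow> rng n e = p n \<Longrightarrow> is_min_edge E rng \<omega> n e \<Longrightarrow>
      src n e = q (n - 1)"
    and min_q: "\<And>n e. N < n \<Longrightarrow> e \<in> E n \<Longrightarrow> rng n e = q n \<Longrightarrow> is_min_edge E rng \<omega> n e \<Longrightarrow>
      src n e = p (n - 1)"
    and z: "z \<in> paths E src rng v0" "\<And>i. N \<le> i \<Longrightarrow> i < k \<Longrightarrow> is_min_edge E rng \<omega> (Suc i) (z i)"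
    and k: "N \<le> k" "src (Suc k) (z k) = q k"
  shows "src (Suc N) (z N) = (if even (k - N) then q N else p N)"
proof -
  have "src (Suc (k - t)) (z (k - t)) = (if even t then q (k - t) else p (k - t))"
    if "t \<le> k - N" for t
    using that
  proof (induction t)
    case (Suc t)
    define j where "j = k - Suc t"
    have j: "N \<le> j" "j < k" "Suc j = k - t" using Suc.prems k unfolding j_def by auto
    have "rng (Suc j) (z j) = (if even t then q (Suc j) else p (Suc j))"
      using Suc j pathsD(3)[OF z(1), of j] by simp
    then show ?case
      using min_p[of "Suc j" "z j"] min_q[of "Suc j" "z j"] pathsD(1)[OF z(1), of j]
        z(2)[OF j(1,2)] j
      by (auto simp: j_def[symmetric])
  qed (use k in simp)
  from this[of "k - N"] show ?thesis using k by simp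
qed

lemma deviating_path:
  assumes succ_q: "\<And>n. N < n \<Longrightarrow> \<exists>e e'. e \<in> E n \<and> rng n e = q n \<and> src n e = p (n - 1) \<and>
      src n e' = q (n - 1) \<and> is_succ_edge E rng \<omega> n e e'"
    and x: "x \<in> paths E src rng v0" "src (Suc k) (x k) = p k" and k: "N < k"
  obtains y e' where "y \<in> paths E src rng v0" "\<And>j. j < k \<Longrightarrow> y j = x j" "y k \<in> E (Suc k)"
    "is_succ_edge E rng \<omega> (Suc k) (y k) e'" "src (Suc k) e' = q k"
proof -
  obtain e e' where e: "e \<in> E (Suc k)" "rng (Suc k) e = q (Suc k)" "src (Suc k) e = p k"
    "src (Suc k) e' = q k" "is_succ_edge E rng \<omega> (Suc k) e e'"
    using succ_q[of "Suc k"] k by auto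
  have "\<exists>e'. e' \<in> E (Suc i) \<and> src (Suc i) e' = q i \<and> rng (Suc i) e' = q (Suc i)" if "N \<le> i" for i
    using succ_q[of "Suc i"] that is_succ_edgeD by fastforce
  then obtain t where t: "\<And>i. N \<le> i \<Longrightarrow>
      t i \<in> E (Suc i) \<and> src (Suc i) (t i) = q i \<and> rng (Suc i) (t i) = q (Suc i)"
    by metis
  define y where "y i = (if i < Suc k then (x(k := e)) i else t i)" for i
  have "initial_path E src rng v0 k (x(k := e)) (src (Suc k) (x k))"
    by (subst initial_path_cong[of k _ x]) (simp_all add: initial_path_paths[OF x(1)])
  then have "initial_path E src rng v0 (Suc k) (x(k := e)) (src (Suc (Suc k)) (t (Suc k)))"
    using x(2) e t[of "Suc k"] k by (simp add: fun_upd_same del: fun_upd_apply)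
  then have "y \<in> paths E src rng v0"
    unfolding y_def by (rule splice_in_paths) (use t k in auto)
  moreover have "\<And>j. j < k \<Longrightarrow> y j = x j" "y k = e" by (simp_all add: y_def)
  ultimately show ?thesis using that e by metis
qed

text \<open>The dependence on the parity of \<open>k\<close> is what rules out continuity at the maximal path
  through the \<open>p\<close>-vertices.\<close>

lemma vershik_map_parity:
  assumes vm: "vershik_map E src rng v0 \<omega> \<phi>"
    and min_p: "\<And>n e. N < n \<Longrightarrow> e \<in> E n \<Longrightarrow> rng n e = p n \<Longrightarrow> is_min_edge E rng \<omega> n e \<Longrightarrow>
      src n e = q (n - 1)"
    and min_q: "\<And>n e. N < n \<Longrightarrow> e \<in> E n \<Longrightarrow> rng n e = q n \<Longrightarrow> is_min_edge E rng \<omega> n e \<Longrightarrow>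
      src n e = p (n - 1)"
    and succ_q: "\<And>n. N < n \<Longrightarrow> \<exists>e e'. e \<in> E n \<and> rng n e = q n \<and> src n e = p (n - 1) \<and>
      src n e' = q (n - 1) \<and> is_succ_edge E rng \<omega> n e e'"
    and x: "x \<in> max_paths E src rng v0 \<omega>" "\<And>i. N \<le> i \<Longrightarrow> src (Suc i) (x i) = p i"
    and k: "N < k"
  obtains y where "y \<in> paths E src rng v0" "\<And>j. j < k \<Longrightarrow> y j = x j"
    "src (Suc N) (\<phi> y N) = (if even (k - N) then q N else p N)"
proof -
  have xP: "x \<in> paths E src rng v0" and xmax: "\<And>i. is_max_edge E rng \<omega> (Suc i) (x i)"
    using x(1) by (auto simp: max_paths_def)
  obtain y e' where y: "y \<in> paths E src rng v0" "\<And>j. j < k \<Longrightarrow> y j = x j" "y k \<in> E (Suc k)"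
    "is_succ_edge E rng \<omega> (Suc k) (y k) e'" "src (Suc k) e' = q k"
    using deviating_path[OF succ_q xP _ k] x(2)[of k] k by auto
  have "\<not> is_max_edge E rng \<omega> (Suc k) (y k)" using succ_edge_not_max[OF _ y(3,4)] by simp
  then have "y \<in> paths E src rng v0 - max_paths E src rng v0 \<omega>"
    and "(LEAST i. \<not> is_max_edge E rng \<omega> (Suc i) (y i)) = k"
    using y(1,2) xmax by (auto simp: max_paths_def intro!: Least_equality simp: not_less[symmetric])
  with vm have "is_succ_edge E rng \<omega> (Suc k) (y k) (\<phi> y k)"
    and ymin: "\<And>i. i < k \<Longrightarrow> is_min_edge E rng \<omega> (Suc i) (\<phi> y i)"
    unfolding vershik_map_def Let_def by auto
  then have "\<phi> y k = e'" using is_succ_edge_unique[OF _ y(3)] y(4) by simp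
  moreover have "\<phi> y \<in> paths E src rng v0"
    using continuous_map_image_subset_topspace[OF vershik_map_continuous[OF vm]] y(1) by auto
  ultimately have "src (Suc N) (\<phi> y N) = (if even (k - N) then q N else p N)"
    by (intro min_edges_alternate[OF min_p min_q]) (use ymin y(5) k in auto)
  with that y(1,2) show ?thesis by blast
qed

theorem not_vershik_map_if_crossing:
  assumes pq: "\<And>m. N \<le> m \<Longrightarrow> p m \<in> V m \<and> q m \<in> V m \<and> p m \<noteq> q m"
    and max_p: "\<And>n e. N < n \<Longrightarrow> e \<in> E n \<Longrightarrow> rng n e = p n \<Longrightarrow> is_max_edge E rng \<omega> n e \<Longrightarrow>
      src n e = p (n - 1)"
    and min_p: "\<And>n e. N < n \<Longrightarrow> e \<in> E n \<Longrightarrow> rng n e = p n \<Longrightarrow> is_min_edge E rng \<omega> n e \<Longrightarrow>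
      src n e = q (n - 1)"
    and min_q: "\<And>n e. N < n \<Longrightarrow> e \<in> E n \<Longrightarrow> rng n e = q n \<Longrightarrow> is_min_edge E rng \<omega> n e \<Longrightarrow>
      src n e = p (n - 1)"
    and succ_q: "\<And>n. N < n \<Longrightarrow> \<exists>e e'. e \<in> E n \<and> rng n e = q n \<and> src n e = p (n - 1) \<and>
      src n e' = q (n - 1) \<and> is_succ_edge E rng \<omega> n e e'"
  shows "\<not> vershik_map E src rng v0 \<omega> \<phi>"
proof
  assume vm: "vershik_map E src rng v0 \<omega> \<phi>"
  obtain x where x: "x \<in> max_paths E src rng v0 \<omega>" "\<And>i. N \<le> i \<Longrightarrow> src (Suc i) (x i) = p i"
    by (rule max_path_through) (use pq max_p in auto)
  have "x \<in> paths E src rng v0" using x(1) by (simp add: max_paths_def)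
  from continuous_map_path_topD[OF vershik_map_continuous[OF vm] this, of N] obtain M
    where M: "\<And>y. y \<in> paths E src rng v0 \<Longrightarrow> (\<forall>j<M. y j = x j) \<Longrightarrow> \<phi> y N = \<phi> x N"
    by blast
  have parity: "src (Suc N) (\<phi> x N) = (if even (k - N) then q N else p N)"
    if k: "N < k" "M \<le> k" for k
  proof -
    obtain y where "y \<in> paths E src rng v0" "\<And>j. j < k \<Longrightarrow> y j = x j"
      "src (Suc N) (\<phi> y N) = (if even (k - N) then q N else p N)"
      using vershik_map_parity[OF vm min_p min_q succ_q x k(1)] by blast
    moreover from this(1,2) have "\<phi> y N = \<phi> x N" using k(2) by (intro M) auto
    ultimately show ?thesis by simp
  qed
  from parity[of "M + N + 1"] parity[of "M + N + 2"] show False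
    using pq[of N] by (cases "even (M + 1)") auto
qed

end

section \<open>The space of orderings\<close>

lemma topspace_ord_top:
  "topspace (ord_top V E rng) =
    (\<Pi>\<^sub>E i\<in>(SIGMA n:{1..}. V n). {R. linear_order_on (in_edges E rng (fst i) (snd i)) R})"
  by (auto simp: ord_top_def PiE_iff split: prod.splits)

lemma ordered_bratteli_topspace:
  "bratteli V E src rng v0 \<Longrightarrow> \<omega> \<in> topspace (ord_top V E rng) \<Longrightarrow> ordered_bratteli V E src rng v0 \<omega>"
  by unfold_locales (auto simp: topspace_ord_top PiE_iff)

lemma openin_ord_top_contains_tail:
  assumes "openin (ord_top V E rng) T" "\<omega>0 \<in> T"
  obtains N where "\<And>\<omega>. \<omega> \<in> topspace (ord_top V E rng) \<Longrightarrow>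
    (\<And>n v. n \<le> N \<Longrightarrow> v \<in> V n \<Longrightarrow> \<omega> (n, v) = \<omega>0 (n, v)) \<Longrightarrow> \<omega> \<in> T"
proof -
  define I where "I = (SIGMA n:{1..}. V n)"
  define X where "X = (\<lambda>(n, v). discrete_topology {R. linear_order_on (in_edges E rng n v) R})"
  have "openin (product_topology X I) T" using assms(1) by (simp add: ord_top_def I_def X_def)
  from product_topology_open_contains_basis[OF this assms(2)] obtain U where
    U: "\<omega>0 \<in> (\<Pi>\<^sub>E i\<in>I. U i)" "finite {i. U i \<noteq> topspace (X i)}" "(\<Pi>\<^sub>E i\<in>I. U i) \<subseteq> T"
    by blast
  define N where "N = Max (fst ` {i. U i \<noteq> topspace (X i)})"
  have "\<omega> \<in> T" if \<omega>: "\<omega> \<in> topspace (ord_top V E rng)"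
    and agree: "\<And>n v. n \<le> N \<Longrightarrow> v \<in> V n \<Longrightarrow> \<omega> (n, v) = \<omega>0 (n, v)" for \<omega>
  proof -
    have "\<omega> i \<in> U i" if i: "i \<in> I" for i
    proof (cases "U i = topspace (X i)")
      case True
      then show ?thesis using \<omega> i by (auto simp: ord_top_def I_def X_def PiE_iff split: prod.splits)
    next
      case False
      then have "fst i \<le> N" using U(2) by (simp add: N_def)
      then show ?thesis using agree[of "fst i" "snd i"] U(1) i by (auto simp: I_def PiE_iff)
    qed
    then have "\<omega> \<in> (\<Pi>\<^sub>E i\<in>I. U i)" using \<omega> by (auto simp: ord_top_def I_def PiE_iff)
    then show ?thesis using U(3) by blast
  qed
  then show ?thesis using that by blast
qed

definition graft :: "(nat \<Rightarrow> 'v set) \<Rightarrow> nat \<Rightarrow> (nat \<times> 'v \<Rightarrow> 'e rel) \<Rightarrow> (nat \<times> 'v \<Rightarrow> 'e rel) \<Rightarrow>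
    nat \<times> 'v \<Rightarrow> 'e rel"
  where "graft V N R \<omega> = (\<lambda>(n, v). if N < n \<and> v \<in> V n then R (n, v) else \<omega> (n, v))"

lemma graft_in_topspace:
  assumes "\<omega> \<in> topspace (ord_top V E rng)"
    and "\<And>n v. N < n \<Longrightarrow> v \<in> V n \<Longrightarrow> linear_order_on (in_edges E rng n v) (R (n, v))"
  shows "graft V N R \<omega> \<in> topspace (ord_top V E rng)"
  using assms unfolding topspace_ord_top by (auto simp: graft_def PiE_iff extensional_def)

lemma graft_below [simp]: "N < n \<Longrightarrow> v \<in> V n \<Longrightarrow> graft V N R \<omega> (n, v) = R (n, v)"
  and graft_above [simp]: "n \<le> N \<Longrightarrow> graft V N R \<omega> (n, v) = \<omega> (n, v)"
  by (simp_all add: graft_def)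


section \<open>Two tracks of vertices\<close>

lemma has_rank_two_tracks:
  assumes "has_rank V d" "2 \<le> d"
  obtains N0 p q where "\<And>m. N0 \<le> m \<Longrightarrow> p m \<in> V m \<and> q m \<in> V m \<and> p m \<noteq> q m"
proof -
  have d: "d = (LEAST k. infinite {n. card (V n) = k})" using assms(1) by (simp add: has_rank_def)
  have "finite {n. card (V n) = k}" if "k < 2" for k
    using not_less_Least[of k "\<lambda>k. infinite {n. card (V n) = k}"] assms(2) d that by auto
  then have "finite ({n. card (V n) = 0} \<union> {n. card (V n) = 1})" by simp
  moreover have "{n. card (V n) < 2} \<subseteq> {n. card (V n) = 0} \<union> {n. card (V n) = 1}" by auto
  ultimately have "finite {n. card (V n) < 2}" by (rule finite_subset[rotated])
  then obtain N0 where N0: "\<And>n. card (V n) < 2 \<Longrightarrow> n < N0"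
    unfolding finite_nat_set_iff_bounded by blast
  have "\<exists>z. N0 \<le> m \<longrightarrow> fst z \<in> V m \<and> snd z \<in> V m \<and> fst z \<noteq> snd z" for m
  proof (cases "N0 \<le> m")
    case True
    then have c: "2 \<le> card (V m)" using N0[of m] by (meson not_le)
    then have "finite (V m)" by (metis card.infinite not_numeral_le_zero)
    moreover have "\<not> card (V m) \<le> Suc 0" using c by simp
    ultimately obtain x y where "x \<in> V m" "y \<in> V m" "x \<noteq> y" using card_le_Suc0_iff_eq by blast
    then show ?thesis by (intro exI[of _ "(x, y)"]) simp
  qed simp
  then obtain z where "\<And>m. N0 \<le> m \<Longrightarrow> fst (z m) \<in> V m \<and> snd (z m) \<in> V m \<and> fst (z m) \<noteq> snd (z m)"
    by metis
  then show ?thesis by (rule that)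
qed

definition edge_between :: "(nat \<Rightarrow> 'e set) \<Rightarrow> (nat \<Rightarrow> 'e \<Rightarrow> 'v) \<Rightarrow> (nat \<Rightarrow> 'e \<Rightarrow> 'v) \<Rightarrow> nat \<Rightarrow> 'v \<Rightarrow> 'v \<Rightarrow> 'e"
  where "edge_between E src rng n w v = (SOME e. e \<in> E n \<and> src n e = w \<and> rng n e = v)"

lemma edge_between:
  assumes "positive_incidence V E src rng" "1 \<le> n" "w \<in> V (n - 1)" "v \<in> V n"
  shows "edge_between E src rng n w v \<in> in_edges E rng n v"
    and "src n (edge_between E src rng n w v) = w"
proof -
  obtain m where m: "n = Suc m" using assms(2) by (cases n) auto
  then have "0 < incidence E src rng m v w" using assms unfolding positive_incidence_def by simp
  then have "{e \<in> E (Suc m). src (Suc m) e = w \<and> rng (Suc m) e = v} \<noteq> {}"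
    unfolding incidence_def by (metis card.empty less_irrefl)
  then have "\<exists>e. e \<in> E n \<and> src n e = w \<and> rng n e = v" using m by blast
  from someI_ex[OF this] show "edge_between E src rng n w v \<in> in_edges E rng n v"
    "src n (edge_between E src rng n w v) = w"
    by (simp_all add: edge_between_def in_edges_def)
qed

definition funnel_order ::
  "(nat \<Rightarrow> 'e set) \<Rightarrow> (nat \<Rightarrow> 'e \<Rightarrow> 'v) \<Rightarrow> (nat \<Rightarrow> 'e \<Rightarrow> 'v) \<Rightarrow> (nat \<Rightarrow> 'v) \<Rightarrow> (nat \<Rightarrow> 'v) \<Rightarrow> nat \<times> 'v \<Rightarrow> 'e rel"
  where "funnel_order E src rng p q = (\<lambda>(n, v). order_first_last (in_edges E rng n v)
     (edge_between E src rng n (q (n - 1)) v) (edge_between E src rng n (p (n - 1)) v))"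

definition crossing_order ::
  "(nat \<Rightarrow> 'e set) \<Rightarrow> (nat \<Rightarrow> 'e \<Rightarrow> 'v) \<Rightarrow> (nat \<Rightarrow> 'e \<Rightarrow> 'v) \<Rightarrow> (nat \<Rightarrow> 'v) \<Rightarrow> (nat \<Rightarrow> 'v) \<Rightarrow> nat \<times> 'v \<Rightarrow> 'e rel"
  where "crossing_order E src rng p q = (\<lambda>(n, v). if v = q n
     then order_first_second (in_edges E rng n v)
       (edge_between E src rng n (p (n - 1)) v) (edge_between E src rng n (q (n - 1)) v)
     else funnel_order E src rng p q (n, v))"

locale two_tracks =
  fixes V :: "nat \<Rightarrow> 'v set" and E :: "nat \<Rightarrow> 'e set" and src rng :: "nat \<Rightarrow> 'e \<Rightarrow> 'v"
    and v0 :: 'v and N :: nat and p q :: "nat \<Rightarrow> 'v"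
  assumes diagram: "bratteli V E src rng v0"
    and positive: "positive_incidence V E src rng"
    and tracks: "\<And>m. N \<le> m \<Longrightarrow> p m \<in> V m \<and> q m \<in> V m \<and> p m \<noteq> q m"
begin

abbreviation "from_p n v \<equiv> edge_between E src rng n (p (n - 1)) v"
abbreviation "from_q n v \<equiv> edge_between E src rng n (q (n - 1)) v"

lemma from_tracks:
  assumes "N < n" "v \<in> V n"
  shows "from_p n v \<in> in_edges E rng n v" "src n (from_p n v) = p (n - 1)"
    "from_q n v \<in> in_edges E rng n v" "src n (from_q n v) = q (n - 1)"
    "from_p n v \<noteq> from_q n v"
proof -
  have n: "1 \<le> n" "N \<le> n - 1" using assms(1) by auto
  note pq = tracks[OF n(2)]
  show "from_p n v \<in> in_edges E rng n v" "src n (from_p n v) = p (n - 1)"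
    "from_q n v \<in> in_edges E rng n v" "src n (from_q n v) = q (n - 1)"
    using edge_between[OF positive n(1) _ assms(2)] pq by auto
  then show "from_p n v \<noteq> from_q n v" using pq by metis
qed

lemma funnel_order:
  assumes "N < n" "v \<in> V n"
  shows "linear_order_on (in_edges E rng n v) (funnel_order E src rng p q (n, v))"
    "\<forall>f\<in>in_edges E rng n v. (from_q n v, f) \<in> funnel_order E src rng p q (n, v)"
    "\<forall>f\<in>in_edges E rng n v. (f, from_p n v) \<in> funnel_order E src rng p q (n, v)"
proof -
  have "finite (in_edges E rng n v)" using finite_in_edges[OF diagram] assms(1) by simp
  then show "linear_order_on (in_edges E rng n v) (funnel_order E src rng p q (n, v))"
    "\<forall>f\<in>in_edges E rng n v. (from_q n v, f) \<in> funnel_order E src rng p q (n, v)"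
    "\<forall>f\<in>in_edges E rng n v. (f, from_p n v) \<in> funnel_order E src rng p q (n, v)"
    using order_first_last[of _ "from_q n v" "from_p n v"] from_tracks[OF assms]
    by (simp_all add: funnel_order_def)
qed

lemma crossing_order_q:
  assumes "N < n"
  shows "linear_order_on (in_edges E rng n (q n)) (crossing_order E src rng p q (n, q n))"
    "\<forall>f\<in>in_edges E rng n (q n). (from_p n (q n), f) \<in> crossing_order E src rng p q (n, q n)"
    "\<forall>f\<in>in_edges E rng n (q n) - {from_p n (q n)}.
      (from_q n (q n), f) \<in> crossing_order E src rng p q (n, q n)"
proof -
  have "finite (in_edges E rng n (q n))" using finite_in_edges[OF diagram] assms by simp
  then show "linear_order_on (in_edges E rng n (q n)) (crossing_order E src rng p q (n, q n))"
    "\<forall>f\<in>in_edges E rng n (q n). (from_p n (q n), f) \<in> crossing_order E src rng p q (n, q n)"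
    "\<forall>f\<in>in_edges E rng n (q n) - {from_p n (q n)}.
      (from_q n (q n), f) \<in> crossing_order E src rng p q (n, q n)"
    using order_first_second[of _ "from_p n (q n)" "from_q n (q n)"] from_tracks[OF assms]
      tracks[of n] assms
    by (simp_all add: crossing_order_def)
qed

lemma crossing_order_linear:
  "N < n \<Longrightarrow> v \<in> V n \<Longrightarrow> linear_order_on (in_edges E rng n v) (crossing_order E src rng p q (n, v))"
  using funnel_order(1) crossing_order_q(1) by (cases "v = q n") (auto simp: crossing_order_def)

end


context two_tracks
begin

lemma src_extreme_funnel_edge:
  assumes \<omega>: "\<omega> (n, v) = funnel_order E src rng p q (n, v)"
    and n: "N < n" "v \<in> V n" and e: "e \<in> E n" "rng n e = v"
  shows "is_max_edge E rng \<omega> n e \<Longrightarrow> src n e = p (n - 1)"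
    and "is_min_edge E rng \<omega> n e \<Longrightarrow> src n e = q (n - 1)"
proof -
  note facts = funnel_order[OF n, folded \<omega>] from_tracks[OF n]
  show "src n e = p (n - 1)" if "is_max_edge E rng \<omega> n e"
  proof -
    have "e = from_p n v" by (rule is_max_edge_eqI[OF _ _ _ e that]) (use facts in simp_all)
    then show ?thesis using facts by simp
  qed
  show "src n e = q (n - 1)" if "is_min_edge E rng \<omega> n e"
  proof -
    have "e = from_q n v" by (rule is_min_edge_eqI[OF _ _ _ e that]) (use facts in simp_all)
    then show ?thesis using facts by simp
  qed
qed

lemma crossing_order_at_q:
  assumes \<omega>: "\<omega> (n, q n) = crossing_order E src rng p q (n, q n)" and n: "N < n"
  shows "e \<in> E n \<Longrightarrow> rng n e = q n \<Longrightarrow> is_min_edge E rng \<omega> n e \<Longrightarrow> src n e = p (n - 1)"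
    and "is_succ_edge E rng \<omega> n (from_p n (q n)) (from_q n (q n))"
proof -
  note facts = crossing_order_q[OF n, folded \<omega>] from_tracks[OF n] tracks[of n] n
  show "src n e = p (n - 1)" if e: "e \<in> E n" "rng n e = q n" "is_min_edge E rng \<omega> n e"
  proof -
    have "e = from_p n (q n)" by (rule is_min_edge_eqI[OF _ _ _ e]) (use facts in simp_all)
    then show ?thesis using facts by simp
  qed
  show "is_succ_edge E rng \<omega> n (from_p n (q n)) (from_q n (q n))"
    using facts not_sym[OF from_tracks(5)[OF n]] by (auto simp: is_succ_edge_def in_edges_def)
qed

theorem graft_funnel_order_perfect:
  assumes "\<omega>0 \<in> topspace (ord_top V E rng)"
  shows "graft V N (funnel_order E src rng p q) \<omega>0 \<in> perfect_orderings V E src rng v0"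
proof -
  let ?\<omega> = "graft V N (funnel_order E src rng p q) \<omega>0"
  have top: "?\<omega> \<in> topspace (ord_top V E rng)"
    using graft_in_topspace[OF assms funnel_order(1)] by blast
  interpret ordered_bratteli V E src rng v0 ?\<omega>
    using ordered_bratteli_topspace[OF diagram top] .
  have "funnelled_ordering V E src rng v0 ?\<omega> N p q"
  proof
    fix n e assume e: "N < n" "e \<in> E n"
    then have "rng n e \<in> V n" using edge_vertices by simp
    note src_extreme_funnel_edge[of ?\<omega>, OF _ e(1) this e(2) refl]
    then show "is_max_edge E rng ?\<omega> n e \<Longrightarrow> src n e = p (n - 1)"
      and "is_min_edge E rng ?\<omega> n e \<Longrightarrow> src n e = q (n - 1)"
      using e(1) \<open>rng n e \<in> V n\<close> by simp_all
  qed (use tracks in auto)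
  then have "vershik_map E src rng v0 ?\<omega> (funnelled_ordering.vershik E src rng ?\<omega> N q)"
    by (rule funnelled_ordering.vershik_map_vershik)
  with top show ?thesis unfolding perfect_orderings_def by blast
qed

theorem graft_crossing_order_not_perfect:
  assumes "\<omega>0 \<in> topspace (ord_top V E rng)"
  shows "graft V N (crossing_order E src rng p q) \<omega>0 \<notin> perfect_orderings V E src rng v0"
proof -
  let ?\<omega> = "graft V N (crossing_order E src rng p q) \<omega>0"
  have top: "?\<omega> \<in> topspace (ord_top V E rng)"
    using graft_in_topspace[OF assms crossing_order_linear] by blast
  interpret ordered_bratteli V E src rng v0 ?\<omega>
    using ordered_bratteli_topspace[OF diagram top] .
  have at_p: "?\<omega> (n, p n) = funnel_order E src rng p q (n, p n)"
    and at_q: "?\<omega> (n, q n) = crossing_order E src rng p q (n, q n)" if "N < n" for n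
    using tracks[of n] that by (simp_all add: crossing_order_def)
  have "\<not> vershik_map E src rng v0 ?\<omega> \<phi>" for \<phi>
  proof (rule not_vershik_map_if_crossing[OF tracks])
    fix n e assume e: "N < n" "e \<in> E n"
    note p_edges = src_extreme_funnel_edge[where \<omega> = ?\<omega> and v = "p n", OF at_p[OF e(1)] e(1) _ e(2)]
    show "rng n e = p n \<Longrightarrow> is_max_edge E rng ?\<omega> n e \<Longrightarrow> src n e = p (n - 1)"
      and "rng n e = p n \<Longrightarrow> is_min_edge E rng ?\<omega> n e \<Longrightarrow> src n e = q (n - 1)"
      using p_edges tracks[of n] e(1) by simp_all
    show "rng n e = q n \<Longrightarrow> is_min_edge E rng ?\<omega> n e \<Longrightarrow> src n e = p (n - 1)"
      using crossing_order_at_q(1)[where \<omega> = ?\<omega>, OF at_q[OF e(1)] e] .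
  next
    fix n assume n: "N < n"
    show "\<exists>e e'. e \<in> E n \<and> rng n e = q n \<and> src n e = p (n - 1) \<and>
        src n e' = q (n - 1) \<and> is_succ_edge E rng ?\<omega> n e e'"
      using crossing_order_at_q(2)[where \<omega> = ?\<omega>, OF at_q[OF n] n]
        from_tracks[OF n, of "q n"] tracks[of n] n
      by (intro exI conjI) (auto simp: in_edges_def)
  qed
  then show ?thesis unfolding perfect_orderings_def by blast
qed

end

theorem mainTheorem2:
  fixes V :: "nat \<Rightarrow> 'v set" and E :: "nat \<Rightarrow> 'e set"
    and src rng :: "nat \<Rightarrow> 'e \<Rightarrow> 'v" and v0 :: 'v and d :: nat
  assumes "bratteli V E src rng v0"
    and "aperiodic E src rng v0"
    and "cantor_paths E src rng v0"
    and "\<not> decomposable V E src rng"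
    and "simple_bratteli V E src rng"
    and "has_rank V d" and "d \<ge> 2"
    and "positive_incidence V E src rng"
  shows "ord_top V E rng closure_of perfect_orderings V E src rng v0 = topspace (ord_top V E rng)
     \<and> ord_top V E rng closure_of (topspace (ord_top V E rng) - perfect_orderings V E src rng v0)
         = topspace (ord_top V E rng)"
proof -
  obtain N0 p q where pq: "\<And>m. N0 \<le> m \<Longrightarrow> p m \<in> V m \<and> q m \<in> V m \<and> p m \<noteq> q m"
    using has_rank_two_tracks[OF assms(6,7)] by blast
  have "S \<inter> T \<noteq> {}"
    if S: "S \<in> {perfect_orderings V E src rng v0,
      topspace (ord_top V E rng) - perfect_orderings V E src rng v0}"
      and T: "openin (ord_top V E rng) T" "T \<noteq> {}" for S T
  proof -
    obtain \<omega>0 where \<omega>0: "\<omega>0 \<in> T" using T(2) by blast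
    then have top: "\<omega>0 \<in> topspace (ord_top V E rng)" using openin_subset[OF T(1)] by blast
    obtain N where N: "\<And>\<omega>. \<omega> \<in> topspace (ord_top V E rng) \<Longrightarrow>
        (\<And>n v. n \<le> N \<Longrightarrow> v \<in> V n \<Longrightarrow> \<omega> (n, v) = \<omega>0 (n, v)) \<Longrightarrow> \<omega> \<in> T"
      using openin_ord_top_contains_tail[OF T(1) \<omega>0] by blast
    define N' where "N' = max N N0"
    interpret two_tracks V E src rng v0 N' p q
      using assms(1,8) pq by unfold_locales (auto simp: N'_def)
    have "graft V N' R \<omega>0 \<in> T" if "graft V N' R \<omega>0 \<in> topspace (ord_top V E rng)" for R
      using N[OF that] by (simp add: N'_def)
    then show ?thesis
      using S graft_funnel_order_perfect[OF top] graft_crossing_order_not_perfect[OF top]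
        graft_in_topspace[OF top crossing_order_linear] unfolding perfect_orderings_def
      by blast
  qed
  then show ?thesis unfolding dense_intersects_open by blast
qed

end
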